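(* Let $n\ge 1$ and let $w\in\widetilde{S_n}$ be a permutation, with image $(P(w),Q(w),\rho(w))$ under the affine matrix-ball construction (AMBC). Then $L(w)=\tau(P(w))$ and $R(w)=\tau(Q(w))$.
   Context: For $i\in\mathbb Z$ write $\overline{i}=i+n\mathbb Z$ and $[\overline n]=\{\overline 1,\dots,\overline n\}$. A partial (extended affine) permutation is an injection $w:U\to\mathbb Z$, where $U\subseteq\mathbb Z$ satisfies $x\in U\iff x+n\in U$, with $w(i+n)=w(i)+n$ for $i\in U$; if $U=\mathbb Z$ and $w$ is a bijection, $w$ is a permutation; $\widetilde{S_n}$ is the set of permutations. The balls of $w$ are the points $(i,w(i))\in\mathbb Z^2$, $i\in U$, in matrix coordinates (first coordinate = row, increasing downward/southward; second = column, increasing rightward/eastward). A cell $(i,j)$ is northwest of $(i',j')$ if $i\le i'$ and $j\le j'$ (strictly northwest if both inequalities are strict), northeast if $i\le i'$, $j\ge j'$, southwest if $i\ge i'$, $j\le j'$, etc. The translates of a cell are its images under $(i,j)\mapsto(i+kn,j+kn)$, $k\in\mathbb Z$. AMBC. Let $w$ be a nonempty partial permutation. A channel of $w$ is a set of balls of $w$, invariant under translation by $(n,n)$, any two of whose elements are comparable in the northwest order, and whose number of translation classes is maximal among such sets. There is a unique southwest-most channel $C$ (for every channel $C'$, each ball of $C$ is weakly southwest of some ball of $C'$). Number the balls of $C$ by consecutive integers $\tilde d$ increasing from northwest to southeast and set, for each ball $b$ of $w$, $d(b)=\max(\tilde d(b_k)+k)$ over all sequences of balls $b=b_0,b_1,\dots,b_k$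 with $b_{t+1}$ strictly northwest of $b_t$ and $b_k\in C$ (this maximum is finite). For each integer $t$, write the balls with $d=t$ as $(i_1,j_1),\dots,(i_s,j_s)$ with $i_1<\dots<i_s$ (then $j_1>\dots>j_s$); their outer corners are the cells $(i_{r+1},j_r)$, $1\le r<s$, and their back corner is the cell $(i_1,j_s)$. Let $\mathrm{fw}(w)$ be the partial permutation whose balls are all the outer corners (over all $t$), and let $S$ be the set of all back corners. Record: as the next row of $P$ the set of residues mod $n$ of the column indices of $S$; as the next row of $Q$ the set of residues of the row indices of $S$; as the next entry of $\rho$ the integer $\sum_{c}(\lceil c_2/n\rceil-\lceil c_1/n\rceil)$, summed over one representative $c=(c_1,c_2)$ of each translation class of $S$. AMBC starts from $w$ with $P,Q,\rho$ empty, records these first rows, replaces $w$ by $\mathrm{fw}(w)$, records second rows, and so on until the partial permutation is empty; the output is $(P(w),Q(w),\rho(w))$. Here $P,Q$ are tabloids of a common shape $\lambda$ ($\lambda_r$ = number of translation classes of back corners at step $r$): a tabloid of shape $\lambda$ is a sequence of pairwise disjoint subsets (rows) $T_1,T_2,\dots$ of $[\overline n]$ with $|T_r|=\lambda_r$, row 1 being the highest. For a permutation $w$, $\lambda$ is a partition of $n$ and each of $P(w),Q(w)$ contains every element of $[\overline n]$ exactly once. Descents: $R(w)=\{\overline i\in[\overline n]: w(i)>w(i+1)\}$ and $L(w)=\{\overline i\in[\overline n]: w^{-1}(i)>w^{-1}(i+1)\}$. For a tabloid $T$ filled with all of $[\overline n]$, $\tau(T)=\{\overline i\in[\overline n]: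 \overline i \text{ lies in a strictly higher row of } T \text{ than } \overline{i+1}\}$. *)

theory Defs
  imports Main
begin

text \<open>Balls are cells (row, column) in int x int. A partial permutation is represented
by its set of balls. Residues mod n are represented by {0..<n}.\<close>

definition transl :: "int \<Rightarrow> int \<Rightarrow> int \<times> int \<Rightarrow> int \<times> int" where
  "transl n k b = (fst b + k * n, snd b + k * n)"

definition balls :: "(int \<Rightarrow> int) \<Rightarrow> (int \<times> int) set" where
  "balls w = {(i, w i) | i. True}"

definition nw :: "int \<times> int \<Rightarrow> int \<times> int \<Rightarrow> bool" where
  "nw a b \<longleftrightarrow> fst a \<le> fst b \<and> snd a \<le> snd b"

definition snw :: "int \<times> int \<Rightarrow> int \<times> int \<Rightarrow> bool" where
  "snw a b \<longleftrightarrow> fst a < fst b \<and> snd a < snd b"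

definition sw :: "int \<times> int \<Rightarrow> int \<times> int \<Rightarrow> bool" where
  "sw a b \<longleftrightarrow> fst a \<ge> fst b \<and> snd a \<le> snd b"

definition transl_classes :: "int \<Rightarrow> (int \<times> int) set \<Rightarrow> (int \<times> int) set set" where
  "transl_classes n C = (\<lambda>b. {transl n k b | k. True}) ` C"

definition chainset :: "int \<Rightarrow> (int \<times> int) set \<Rightarrow> (int \<times> int) set \<Rightarrow> bool" where
  "chainset n B C \<longleftrightarrow> C \<subseteq> B \<and> (\<forall>b\<in>C. \<forall>k. transl n k b \<in> C)
     \<and> (\<forall>x\<in>C. \<forall>y\<in>C. nw x y \<or> nw y x)"

definition is_channel :: "int \<Rightarrow> (int \<times> int) set \<Rightarrow> (int \<times> int) set \<Rightarrow> bool" where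
  "is_channel n B C \<longleftrightarrow> chainset n B C \<and>
     (\<forall>C'. chainset n B C' \<longrightarrow> card (transl_classes n C') \<le> card (transl_classes n C))"

definition sw_channel :: "int \<Rightarrow> (int \<times> int) set \<Rightarrow> (int \<times> int) set" where
  "sw_channel n B = (THE C. is_channel n B C \<and>
     (\<forall>C'. is_channel n B C' \<longrightarrow> (\<forall>b\<in>C. \<exists>b'\<in>C'. sw b b')))"

text \<open>a numbering of the channel by consecutive integers increasing from northwest to
southeast (the choice of offset does not affect the construction)\<close>
definition chan_num :: "int \<Rightarrow> (int \<times> int) set \<Rightarrow> (int \<times> int \<Rightarrow> int)" where
  "chan_num n B = (SOME f. bij_betw f (sw_channel n B) (UNIV :: int set) \<and>
     (\<forall>x\<in>sw_channel n B. \<forall>y\<in>sw_channel n B. snw x y \<longrightarrow> f x < f y))"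

definition dval :: "int \<Rightarrow> (int \<times> int) set \<Rightarrow> int \<times> int \<Rightarrow> int" where
  "dval n B b = Sup {chan_num n B (last bs) + int (length bs) - 1 | bs.
     bs \<noteq> [] \<and> hd bs = b \<and> set bs \<subseteq> B \<and> last bs \<in> sw_channel n B \<and>
     (\<forall>t. Suc t < length bs \<longrightarrow> snw (bs ! Suc t) (bs ! t))}"

definition level :: "int \<Rightarrow> (int \<times> int) set \<Rightarrow> int \<Rightarrow> (int \<times> int) set" where
  "level n B t = {b \<in> B. dval n B b = t}"

definition fw :: "int \<Rightarrow> (int \<times> int) set \<Rightarrow> (int \<times> int) set" where
  "fw n B = {(i', j) | i j i' j'. \<exists>t. (i, j) \<in> level n B t \<and> (i', j') \<in> level n B t \<and> i < i'
      \<and> \<not> (\<exists>b\<in>level n B t. i < fst b \<and> fst b < i')}"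

definition back_corners :: "int \<Rightarrow> (int \<times> int) set \<Rightarrow> (int \<times> int) set" where
  "back_corners n B = {(i, j) | i j. \<exists>t j0 i1. (i, j0) \<in> level n B t \<and> (i1, j) \<in> level n B t
      \<and> (\<forall>b\<in>level n B t. i \<le> fst b \<and> fst b \<le> i1)}"

text \<open>rows of P and Q, indexed from 0 (row 0 = highest row)\<close>
definition ambc_P :: "int \<Rightarrow> (int \<Rightarrow> int) \<Rightarrow> nat \<Rightarrow> int set" where
  "ambc_P n w k = {j mod n | i j. (i, j) \<in> back_corners n ((fw n ^^ k) (balls w))}"

definition ambc_Q :: "int \<Rightarrow> (int \<Rightarrow> int) \<Rightarrow> nat \<Rightarrow> int set" where
  "ambc_Q n w k = {i mod n | i j. (i, j) \<in> back_corners n ((fw n ^^ k) (balls w))}"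

definition tau :: "int \<Rightarrow> (nat \<Rightarrow> int set) \<Rightarrow> int set" where
  "tau n T = {i \<in> {0..<n}. \<exists>r r'. r < r' \<and> i \<in> T r \<and> (i + 1) mod n \<in> T r'}"

definition Rdes :: "int \<Rightarrow> (int \<Rightarrow> int) \<Rightarrow> int set" where
  "Rdes n w = {i \<in> {0..<n}. w i > w (i + 1)}"

definition Ldes :: "int \<Rightarrow> (int \<Rightarrow> int) \<Rightarrow> int set" where
  "Ldes n w = {i \<in> {0..<n}. inv w i > inv w (i + 1)}"

end

theory Submission
  imports Defs
begin

text \<open>
  Row \<open>r\<close> of \<open>P\<close> (resp. \<open>Q\<close>) consists of the column (row) residues that disappear in the
  \<open>r\<close>-th forward step: a column survives the step unless its ball is the last ball, in row
  order, of its level \<open>{d = t}\<close>, and then it is the column of that level's back corner.  So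
  \<open>i \<in> \<tau>(P)\<close> says that residue \<open>i + 1\<close> leaves the columns strictly after residue \<open>i\<close>.

  Let the balls in columns \<open>j\<close> and \<open>j + 1\<close> lie in rows \<open>r\<^sub>j\<close> and \<open>r\<^sub>j\<^sub>+\<^sub>1\<close>.  The function \<open>d\<close>
  increases strictly along the northwest order and takes every smaller value strictly northwest
  of each ball; comparing the successors of the two balls within their levels, one finds that the
  forward step preserves the relative position of the balls in the two columns as long as the
  relevant column is occupied.  If \<open>r\<^sub>j\<^sub>+\<^sub>1 < r\<^sub>j\<close> (a left descent), column \<open>j + 1\<close> is
  therefore still present one step after column \<open>j\<close>, so it leaves strictly later; if
  \<open>r\<^sub>j < r\<^sub>j\<^sub>+\<^sub>1\<close>, column \<open>j\<close> is present whenever column \<open>j + 1\<close> is.  This gives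
  \<open>L(w) = \<tau>(P(w))\<close>, and the same argument for rows gives \<open>R(w) = \<tau>(Q(w))\<close>.

  That \<open>d\<close> is finite rests on channel density: a chain invariant under translation by \<open>q n\<close>
  has at most \<open>q\<close> times as many translation classes as a channel, because the southwest-most
  channel for the period \<open>q n\<close> is unique, hence invariant under translation by \<open>n\<close>.
\<close>

lemma Sup_int_mem:
  fixes X :: "int set"
  assumes "X \<noteq> {}" "bdd_above X"
  shows "Sup X \<in> X"
proof -
  obtain x where "x \<in> X" "Sup X - 1 < x" using less_cSupE[of "Sup X - 1" X] assms by auto
  moreover have "x \<le> Sup X" using cSup_upper[OF \<open>x \<in> X\<close> assms(2)] .
  ultimately have "x = Sup X" by simp
  with \<open>x \<in> X\<close> show ?thesis by simp
qed

lemma card_image_eq_kernel: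
  assumes "\<forall>x\<in>A. \<forall>y\<in>A. g x = g y \<longleftrightarrow> h x = h y"
  shows "card (g ` A) = card (h ` A)"
proof -
  define \<phi> where "\<phi> K = h (SOME x. x \<in> A \<and> g x = K)" for K
  have \<phi>: "\<phi> (g x) = h x" if "x \<in> A" for x
  proof -
    have "\<exists>x'. x' \<in> A \<and> g x' = g x" using that by blast
    hence "(SOME x'. x' \<in> A \<and> g x' = g x) \<in> A \<and> g (SOME x'. x' \<in> A \<and> g x' = g x) = g x"
      by (rule someI_ex)
    thus ?thesis using assms that unfolding \<phi>_def by blast
  qed
  have "h ` A = \<phi> ` (g ` A)" using \<phi> by (force simp: image_image)
  moreover have "inj_on \<phi> (g ` A)" using \<phi> assms by (auto simp: inj_on_def)
  ultimately show ?thesis by (simp add: card_image)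
qed

lemma eq_if_mod_eq_abs_less:
  fixes a b p :: int
  assumes "p > 0" "a mod p = b mod p" "\<bar>a - b\<bar> < p"
  shows "a = b"
proof -
  have "p dvd a - b" using assms(2) by (simp add: mod_eq_dvd_iff)
  then obtain t where t: "a - b = p * t" by (auto simp: dvd_def)
  hence "\<bar>p * t\<bar> < p * 1" using assms(3) by simp
  hence "\<bar>t\<bar> < 1" using assms(1) by (simp add: abs_mult)
  thus ?thesis using t by simp
qed

lemma strict_mono_surj_int_eq_shift:
  fixes g :: "int \<Rightarrow> int"
  assumes "strict_mono g" "surj g"
  shows "g x = g 0 + x"
proof -
  have step: "g (i + 1) = g i + 1" for i
  proof (rule ccontr)
    assume "g (i + 1) \<noteq> g i + 1"
    moreover have "g i < g (i + 1)" using assms(1) by (simp add: strict_mono_less)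
    ultimately have lt: "g i < g i + 1" "g i + 1 < g (i + 1)" by simp_all
    obtain j where j: "g j = g i + 1" using assms(2) by (metis surjD)
    have "g i < g j" "g j < g (i + 1)" using lt j by simp_all
    hence "i < j" "j < i + 1" unfolding strict_mono_less[OF assms(1)] .
    thus False by simp
  qed
  show ?thesis
  proof (induction x rule: int_induct[where k = 0])
    case (step2 i) thus ?case using step[of "i - 1"] by simp
  qed (simp_all add: step)
qed

lemma decreasing_exit:
  fixes S :: "nat \<Rightarrow> 'a set"
  assumes dec: "\<And>k. S (Suc k) \<subseteq> S k" and "S N = {}" and "c \<in> S k0"
  shows "\<exists>r\<ge>k0. c \<in> S r - S (Suc r)"
proof -
  have "S (max N k0) \<subseteq> S N" using lift_Suc_antimono_le[of S, OF dec] by simp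
  hence ex: "k0 \<le> max N k0 \<and> c \<notin> S (max N k0)" using assms(2) by simp
  define r where "r = (LEAST r. k0 \<le> r \<and> c \<notin> S r)"
  have r: "k0 \<le> r" "c \<notin> S r"
    using LeastI[of "\<lambda>r. k0 \<le> r \<and> c \<notin> S r", OF ex] unfolding r_def by simp_all
  then obtain p where p: "r = Suc p" "k0 \<le> p" using assms(3) by (cases r) (auto simp: le_Suc_eq)
  have "c \<in> S p" using Least_le[of "\<lambda>r. k0 \<le> r \<and> c \<notin> S r" p] p r_def by force
  thus ?thesis using p r by auto
qed

lemma exit_before_exit:
  fixes S :: "nat \<Rightarrow> 'a set"
  assumes dec: "\<And>k. S (Suc k) \<subseteq> S k" and "S N = {}" and "i \<in> S 0"
    and step: "\<And>k. i \<in> S k \<Longrightarrow> c \<in> S (Suc k)"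
  shows "\<exists>r r'. r < r' \<and> i \<in> S r - S (Suc r) \<and> c \<in> S r' - S (Suc r')"
proof -
  obtain r where r: "i \<in> S r - S (Suc r)" using decreasing_exit[OF dec assms(2,3)] by blast
  then obtain r' where "r' \<ge> Suc r" "c \<in> S r' - S (Suc r')"
    using decreasing_exit[OF dec assms(2) step] by blast
  thus ?thesis using r by (intro exI[of _ r] exI[of _ r']) auto
qed

lemma not_exit_before_exit:
  fixes S :: "nat \<Rightarrow> 'a set"
  assumes dec: "\<And>k. S (Suc k) \<subseteq> S k" and step: "\<And>k. c \<in> S k \<Longrightarrow> i \<in> S k"
  shows "\<not> (\<exists>r r'. r < r' \<and> i \<in> S r - S (Suc r) \<and> c \<in> S r' - S (Suc r'))"
proof
  assume "\<exists>r r'. r < r' \<and> i \<in> S r - S (Suc r) \<and> c \<in> S r' - S (Suc r')"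
  then obtain r r' where h: "r < r'" "i \<notin> S (Suc r)" "c \<in> S r'" by blast
  have "S r' \<subseteq> S (Suc r)" using lift_Suc_antimono_le[of S, OF dec] h(1) by simp
  thus False using h step by blast
qed

section \<open>Translations, partial permutations and residues\<close>

lemma transl_fst [simp]: "fst (transl n k b) = fst b + k * n" by (simp add: transl_def)
lemma transl_snd [simp]: "snd (transl n k b) = snd b + k * n" by (simp add: transl_def)
lemma transl_0 [simp]: "transl n 0 b = b" by (simp add: transl_def)
lemma transl_transl [simp]: "transl n k (transl n l b) = transl n (k + l) b"
  by (simp add: transl_def algebra_simps)

lemma nw_transl [simp]: "nw (transl n k a) (transl n k b) = nw a b" by (simp add: nw_def)
lemma snw_transl [simp]: "snw (transl n k a) (transl n k b) = snw a b" by (simp add: snw_def)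
lemma sw_transl [simp]: "sw (transl n k a) (transl n k b) = sw a b" by (simp add: sw_def)

lemma nw_refl [simp]: "nw a a" by (simp add: nw_def)
lemma snw_imp_nw: "snw a b \<Longrightarrow> nw a b" by (auto simp: snw_def nw_def)
lemma snw_trans: "snw a b \<Longrightarrow> snw b c \<Longrightarrow> snw a c" by (auto simp: snw_def)
lemma sw_refl [simp]: "sw a a" by (simp add: sw_def)
lemma sw_trans: "sw a b \<Longrightarrow> sw b c \<Longrightarrow> sw a c" by (auto simp: sw_def)
lemma sw_antisym: "sw a b \<Longrightarrow> sw b a \<Longrightarrow> a = b" by (auto simp: sw_def prod_eq_iff)

lemma transl_to_row:
  assumes "fst x mod n = i mod n"
  shows "fst (transl n ((i - fst x) div n) x) = i"
proof -
  have "n dvd i - fst x" using assms[symmetric] by (simp add: mod_eq_dvd_iff)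
  thus ?thesis by simp
qed

lemma transl_to_col:
  assumes "snd x mod n = j mod n"
  shows "snd (transl n ((j - snd x) div n) x) = j"
proof -
  have "n dvd j - snd x" using assms[symmetric] by (simp add: mod_eq_dvd_iff)
  thus ?thesis by simp
qed

definition transl_invariant :: "int \<Rightarrow> (int \<times> int) set \<Rightarrow> bool" where
  "transl_invariant n X \<longleftrightarrow> (\<forall>b\<in>X. \<forall>k. transl n k b \<in> X)"

definition partial_perm :: "int \<Rightarrow> (int \<times> int) set \<Rightarrow> bool" where
  "partial_perm n B \<longleftrightarrow> transl_invariant n B \<and> inj_on fst B \<and> inj_on snd B"

definition row_residues :: "int \<Rightarrow> (int \<times> int) set \<Rightarrow> int set" where
  "row_residues n X = (\<lambda>x. fst x mod n) ` X"

definition col_residues :: "int \<Rightarrow> (int \<times> int) set \<Rightarrow> int set" where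
  "col_residues n X = (\<lambda>x. snd x mod n) ` X"

lemma row_residues_subset: "n > 0 \<Longrightarrow> row_residues n X \<subseteq> {0..<n}"
  by (auto simp: row_residues_def)

lemma col_residues_subset: "n > 0 \<Longrightarrow> col_residues n X \<subseteq> {0..<n}"
  by (auto simp: col_residues_def)

lemma finite_row_residues: "n > 0 \<Longrightarrow> finite (row_residues n X)"
  using row_residues_subset finite_subset by blast

lemma finite_col_residues: "n > 0 \<Longrightarrow> finite (col_residues n X)"
  using col_residues_subset finite_subset by blast

lemma card_row_residues_le: "n > 0 \<Longrightarrow> card (row_residues n X) \<le> nat n"
  using card_mono[OF _ row_residues_subset] by fastforce

lemma partial_perm_transl:
  "partial_perm n B \<Longrightarrow> b \<in> B \<Longrightarrow> transl n k b \<in> B"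
  by (simp add: partial_perm_def transl_invariant_def)

lemma partial_perm_fst_eq:
  "partial_perm n B \<Longrightarrow> x \<in> B \<Longrightarrow> y \<in> B \<Longrightarrow> fst x = fst y \<Longrightarrow> x = y"
  by (auto simp: partial_perm_def inj_on_def)

lemma partial_perm_snd_eq:
  "partial_perm n B \<Longrightarrow> x \<in> B \<Longrightarrow> y \<in> B \<Longrightarrow> snd x = snd y \<Longrightarrow> x = y"
  by (auto simp: partial_perm_def inj_on_def)

lemma partial_perm_row_in_residues:
  assumes "partial_perm n B" "i mod n \<in> row_residues n B"
  shows "\<exists>b\<in>B. fst b = i"
proof -
  obtain b where b: "b \<in> B" and r: "fst b mod n = i mod n"
    using assms(2) by (auto simp: row_residues_def)
  have "fst (transl n ((i - fst b) div n) b) = i" using r by (rule transl_to_row)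
  with partial_perm_transl[OF assms(1) b] show ?thesis by (rule rev_bexI)
qed

lemma partial_perm_col_in_residues:
  assumes "partial_perm n B" "j mod n \<in> col_residues n B"
  shows "\<exists>b\<in>B. snd b = j"
proof -
  obtain b where b: "b \<in> B" and r: "snd b mod n = j mod n"
    using assms(2) by (auto simp: col_residues_def)
  have "snd (transl n ((j - snd b) div n) b) = j" using r by (rule transl_to_col)
  with partial_perm_transl[OF assms(1) b] show ?thesis by (rule rev_bexI)
qed

lemma partial_perm_same_row_residue:
  assumes "partial_perm n B" "x \<in> B" "y \<in> B" "fst x mod n = fst y mod n"
  shows "\<exists>k. y = transl n k x"
proof
  have "fst (transl n ((fst y - fst x) div n) x) = fst y" using assms(4) by (rule transl_to_row)
  thus "y = transl n ((fst y - fst x) div n) x"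
    using partial_perm_fst_eq[OF assms(1) partial_perm_transl[OF assms(1,2)] assms(3)] by simp
qed

lemma partial_perm_same_col_residue:
  assumes "partial_perm n B" "x \<in> B" "y \<in> B" "snd x mod n = snd y mod n"
  shows "\<exists>k. y = transl n k x"
proof
  have "snd (transl n ((snd y - snd x) div n) x) = snd y" using assms(4) by (rule transl_to_col)
  thus "y = transl n ((snd y - snd x) div n) x"
    using partial_perm_snd_eq[OF assms(1) partial_perm_transl[OF assms(1,2)] assms(3)] by simp
qed

section \<open>Channels\<close>

lemma card_transl_classes:
  assumes "n > 0" "partial_perm n B" "chainset n B C"
  shows "card (transl_classes n C) = card (row_residues n C)"
  unfolding transl_classes_def row_residues_def
proof (rule card_image_eq_kernel, intro ballI)
  fix x y assume xy: "x \<in> C" "y \<in> C"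
  show "{transl n k x |k. True} = {transl n k y |k. True} \<longleftrightarrow> fst x mod n = fst y mod n"
  proof
    assume eq: "{transl n k x |k. True} = {transl n k y |k. True}"
    have "y = transl n 0 y" by simp
    then obtain k where "y = transl n k x" using eq by blast
    thus "fst x mod n = fst y mod n" by simp
  next
    assume r: "fst x mod n = fst y mod n"
    have "x \<in> B" "y \<in> B" using xy assms(3) by (auto simp: chainset_def)
    then obtain k where k: "y = transl n k x" using partial_perm_same_row_residue[OF assms(2) _ _ r] by blast
    have "transl n l x = transl n (l - k) y" "transl n l y = transl n (l + k) x" for l
      using k by simp_all
    thus "{transl n k x |k. True} = {transl n k y |k. True}" by blast
  qed
qed

lemma card_row_residues_le_channel:
  assumes "n > 0" "partial_perm n B" "is_channel n B C" "chainset n B C'"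
  shows "card (row_residues n C') \<le> card (row_residues n C)"
proof -
  have "chainset n B C" "card (transl_classes n C') \<le> card (transl_classes n C)"
    using assms(3,4) unfolding is_channel_def by blast+
  thus ?thesis using card_transl_classes[OF assms(1,2)] assms(4) by simp
qed

lemma is_channel_if_card_row_residues:
  assumes "n > 0" "partial_perm n B" "is_channel n B C" "chainset n B C'"
    and "card (row_residues n C) \<le> card (row_residues n C')"
  shows "is_channel n B C'"
  unfolding is_channel_def
proof (intro conjI allI impI assms(4))
  fix D assume D: "chainset n B D"
  have "card (row_residues n D) \<le> card (row_residues n C')"
    using card_row_residues_le_channel[OF assms(1-3) D] assms(5) by simp
  thus "card (transl_classes n D) \<le> card (transl_classes n C')"
    using D assms(4) card_transl_classes[OF assms(1,2)] by simp
qed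

definition sw_meet :: "(int \<times> int) set \<Rightarrow> (int \<times> int) set \<Rightarrow> (int \<times> int) set" where
  "sw_meet A C = {x\<in>A. \<exists>y\<in>C. sw x y} \<union> {y\<in>C. \<exists>x\<in>A. sw y x}"

definition sw_join :: "(int \<times> int) set \<Rightarrow> (int \<times> int) set \<Rightarrow> (int \<times> int) set" where
  "sw_join A C = {x\<in>A. \<exists>y\<in>C. sw y x} \<union> {y\<in>C. \<exists>x\<in>A. sw x y}"

lemma incomparable_iff:
  "\<not> (nw x z \<or> nw z x) \<longleftrightarrow> (fst x < fst z \<and> snd z < snd x) \<or> (fst z < fst x \<and> snd x < snd z)"
  by (auto simp: nw_def)

lemma sw_meet_no_northeast:
  assumes A: "chainset n B A" and C: "chainset n B C"
    and x: "x \<in> sw_meet A C" and z: "z \<in> sw_meet A C" and "fst x < fst z" "snd z < snd x"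
  shows False
proof -
  \<comment> \<open>replacing \<open>x\<close> by a ball northeast of it in the other chain keeps it northeast of \<open>z\<close>\<close>
  obtain y where y: "sw x y" "x \<in> A \<and> y \<in> C \<or> x \<in> C \<and> y \<in> A"
    using x unfolding sw_meet_def by blast
  have "\<not> (nw x z \<or> nw z x)" "\<not> (nw y z \<or> nw z y)"
    using y(1) assms(5,6) by (auto simp: nw_def sw_def)
  moreover have "z \<in> A \<or> z \<in> C" using z unfolding sw_meet_def by blast
  ultimately show False using y(2) A C unfolding chainset_def by blast
qed

lemma sw_join_no_northeast:
  assumes A: "chainset n B A" and C: "chainset n B C"
    and x: "x \<in> sw_join A C" and z: "z \<in> sw_join A C" and "fst x < fst z" "snd z < snd x"
  shows False
proof -
  obtain u where u: "sw u z" "z \<in> A \<and> u \<in> C \<or> z \<in> C \<and> u \<in> A"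
    using z unfolding sw_join_def by blast
  have "\<not> (nw x z \<or> nw z x)" "\<not> (nw x u \<or> nw u x)"
    using u(1) assms(5,6) by (auto simp: nw_def sw_def)
  moreover have "x \<in> A \<or> x \<in> C" using x unfolding sw_join_def by blast
  ultimately show False using u(2) A C unfolding chainset_def by blast
qed

lemma chainset_sw_meet:
  assumes A: "chainset n B A" and C: "chainset n B C"
  shows "chainset n B (sw_meet A C)"
  unfolding chainset_def
proof (intro conjI ballI allI)
  show "sw_meet A C \<subseteq> B" using A C by (auto simp: chainset_def sw_meet_def)
next
  fix b k assume "b \<in> sw_meet A C"
  then obtain y where "sw b y" "b \<in> A \<and> y \<in> C \<or> b \<in> C \<and> y \<in> A"
    unfolding sw_meet_def by blast
  moreover have "transl n k b \<in> A \<and> transl n k y \<in> C \<or> transl n k b \<in> C \<and> transl n k y \<in> A"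
    using calculation(2) A C by (auto simp: chainset_def)
  ultimately show "transl n k b \<in> sw_meet A C"
    unfolding sw_meet_def using sw_transl by blast
next
  fix x z assume "x \<in> sw_meet A C" "z \<in> sw_meet A C"
  thus "nw x z \<or> nw z x"
    using sw_meet_no_northeast[OF A C] incomparable_iff by blast
qed

lemma chainset_sw_join:
  assumes A: "chainset n B A" and C: "chainset n B C"
  shows "chainset n B (sw_join A C)"
  unfolding chainset_def
proof (intro conjI ballI allI)
  show "sw_join A C \<subseteq> B" using A C by (auto simp: chainset_def sw_join_def)
next
  fix b k assume "b \<in> sw_join A C"
  then obtain y where "sw y b" "b \<in> A \<and> y \<in> C \<or> b \<in> C \<and> y \<in> A"
    unfolding sw_join_def by blast
  moreover have "transl n k b \<in> A \<and> transl n k y \<in> C \<or> transl n k b \<in> C \<and> transl n k y \<in> A"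
    using calculation(2) A C by (auto simp: chainset_def)
  ultimately show "transl n k b \<in> sw_join A C"
    unfolding sw_join_def using sw_transl by blast
next
  fix x z assume "x \<in> sw_join A C" "z \<in> sw_join A C"
  thus "nw x z \<or> nw z x"
    using sw_join_no_northeast[OF A C] incomparable_iff by blast
qed

lemma chainset_union_orbit:
  assumes B: "partial_perm n B" and C: "chainset n B C" and a: "a \<in> B"
    and cmp: "\<forall>y\<in>C. nw a y \<or> nw y a"
  shows "chainset n B (C \<union> {transl n k a |k. True})"
  unfolding chainset_def
proof (intro conjI ballI allI)
  show "C \<union> {transl n k a |k. True} \<subseteq> B" using C partial_perm_transl[OF B a] by (auto simp: chainset_def)
next
  fix b k assume "b \<in> C \<union> {transl n k a |k. True}"
  thus "transl n k b \<in> C \<union> {transl n k a |k. True}" using C by (auto simp: chainset_def)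
next
  fix x y assume "x \<in> C \<union> {transl n k a |k. True}" "y \<in> C \<union> {transl n k a |k. True}"
  moreover have "nw (transl n k a) v \<or> nw v (transl n k a)" if v: "v \<in> C" for k v
  proof -
    have "transl n (-k) v \<in> C" using C v by (simp add: chainset_def)
    hence "nw a (transl n (-k) v) \<or> nw (transl n (-k) v) a" using cmp by blast
    thus ?thesis by (auto simp: nw_def)
  qed
  moreover have "nw (transl n k a) (transl n l a) \<or> nw (transl n l a) (transl n k a)" for k l
    using linorder_linear[of "k * n" "l * n"] by (auto simp: nw_def)
  ultimately show "nw x y \<or> nw y x" using C unfolding chainset_def by blast
qed

text \<open>Otherwise the translates of the ball could be added to the channel.\<close>

lemma channel_sw_comparable:
  assumes n: "n > 0" and B: "partial_perm n B" and C: "is_channel n B C" and a: "a \<in> B"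
  shows "\<exists>y\<in>C. sw a y \<or> sw y a"
proof (rule ccontr)
  assume no: "\<not> (\<exists>y\<in>C. sw a y \<or> sw y a)"
  have Cc: "chainset n B C" using C by (simp add: is_channel_def)
  define Orb where "Orb = {transl n k a |k. True}"
  have "\<forall>y\<in>C. nw a y \<or> nw y a" using no by (auto simp: nw_def sw_def)
  hence chain: "chainset n B (C \<union> Orb)" using chainset_union_orbit[OF B Cc a] unfolding Orb_def by blast
  have new: "fst a mod n \<notin> row_residues n C"
  proof
    assume "fst a mod n \<in> row_residues n C"
    then obtain c where c: "c \<in> C" "fst c mod n = fst a mod n" by (auto simp: row_residues_def)
    moreover have "c \<in> B" using c Cc by (auto simp: chainset_def)
    ultimately obtain k where "a = transl n k c" using partial_perm_same_row_residue[OF B _ a] by blast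
    hence "a \<in> C" using c Cc by (auto simp: chainset_def)
    thus False using no sw_refl by blast
  qed
  have "a \<in> Orb" unfolding Orb_def by (metis (mono_tags, lifting) mem_Collect_eq transl_0)
  moreover have "fst b mod n = fst a mod n" if "b \<in> Orb" for b using that unfolding Orb_def by auto
  ultimately have "row_residues n (C \<union> Orb) = insert (fst a mod n) (row_residues n C)"
    unfolding row_residues_def by blast
  hence "card (row_residues n (C \<union> Orb)) = card (row_residues n C) + 1"
    using new finite_row_residues[OF n] by simp
  thus False using card_row_residues_le_channel[OF n B C chain] by simp
qed

text \<open>The meet of two channels is a channel: \<open>A \<union> C\<close> lies in the union of meet and join,
  \<open>A \<inter> C\<close> in both, and the join cannot have more residues than a channel.\<close>

lemma is_channel_sw_meet:
  assumes n: "n > 0" and B: "partial_perm n B" and A: "is_channel n B A" and C: "is_channel n B C"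
  shows "is_channel n B (sw_meet A C)"
proof -
  have Ac: "chainset n B A" and Cc: "chainset n B C" using A C by (auto simp: is_channel_def)
  let ?M = "row_residues n (sw_meet A C)" and ?J = "row_residues n (sw_join A C)"
  have mc: "chainset n B (sw_meet A C)" and jc: "chainset n B (sw_join A C)"
    using chainset_sw_meet[OF Ac Cc] chainset_sw_join[OF Ac Cc] .
  have U: "row_residues n A \<union> row_residues n C \<subseteq> ?M \<union> ?J"
  proof -
    have "x \<in> sw_meet A C \<union> sw_join A C" if x: "x \<in> A" for x
    proof -
      have "x \<in> B" using x Ac by (auto simp: chainset_def)
      then obtain y where "y \<in> C" "sw x y \<or> sw y x" using channel_sw_comparable[OF n B C] by blast
      thus ?thesis using x unfolding sw_meet_def sw_join_def by blast
    qed
    moreover have "x \<in> sw_meet A C \<union> sw_join A C" if x: "x \<in> C" for x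
    proof -
      have "x \<in> B" using x Cc by (auto simp: chainset_def)
      then obtain y where "y \<in> A" "sw x y \<or> sw y x" using channel_sw_comparable[OF n B A] by blast
      thus ?thesis using x unfolding sw_meet_def sw_join_def by blast
    qed
    ultimately show ?thesis unfolding row_residues_def by blast
  qed
  have I: "row_residues n A \<inter> row_residues n C \<subseteq> ?M \<inter> ?J"
  proof
    fix r assume "r \<in> row_residues n A \<inter> row_residues n C"
    then obtain x y where x: "x \<in> A" "r = fst x mod n" and y: "y \<in> C" "r = fst y mod n"
      by (auto simp: row_residues_def)
    have "x \<in> B" "y \<in> B" using x y Ac Cc by (auto simp: chainset_def)
    moreover have "fst y mod n = fst x mod n" using x y by simp
    ultimately obtain k where "x = transl n k y" using partial_perm_same_row_residue[OF B] by blast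
    hence "x \<in> C" using Cc y by (auto simp: chainset_def)
    hence "x \<in> sw_meet A C" "x \<in> sw_join A C" using x sw_refl unfolding sw_meet_def sw_join_def by blast+
    thus "r \<in> ?M \<inter> ?J" using x by (auto simp: row_residues_def)
  qed
  have fin: "finite (row_residues n X)" for X using finite_row_residues[OF n] .
  have "card (row_residues n A) + card (row_residues n C)
      = card (row_residues n A \<union> row_residues n C) + card (row_residues n A \<inter> row_residues n C)"
    using card_Un_Int[OF fin fin] .
  also have "\<dots> \<le> card (?M \<union> ?J) + card (?M \<inter> ?J)"
    using card_mono[OF _ U] card_mono[OF _ I] fin by (meson add_mono finite_Int finite_UnI)
  also have "\<dots> = card ?M + card ?J"
    using card_Un_Int[OF fin fin] by simp
  finally have "card (row_residues n A) + card (row_residues n C) \<le> card ?M + card ?J" .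
  moreover have "card (row_residues n C) = card (row_residues n A)"
    using card_row_residues_le_channel[OF n B A Cc] card_row_residues_le_channel[OF n B C Ac] by simp
  moreover have "card ?J \<le> card (row_residues n A)"
    using card_row_residues_le_channel[OF n B A jc] .
  ultimately have "card (row_residues n A) \<le> card ?M" by linarith
  thus ?thesis using is_channel_if_card_row_residues[OF n B A mc] by simp
qed

lemma channel_exists:
  assumes n: "n > 0" and B: "partial_perm n B"
  shows "\<exists>C. is_channel n B C"
proof -
  have "chainset n B {}" by (simp add: chainset_def)
  moreover have "card (transl_classes n C) < nat n + 1" if "chainset n B C" for C
    using card_transl_classes[OF n B that] card_row_residues_le[OF n, of C] by simp
  ultimately obtain C where "chainset n B C"
    "\<forall>C'. chainset n B C' \<longrightarrow> card (transl_classes n C') \<le> card (transl_classes n C)"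
    using ex_has_greatest_nat[of "chainset n B" "{}" "\<lambda>C. card (transl_classes n C)" "nat n + 1"]
    by blast
  thus ?thesis unfolding is_channel_def by blast
qed

lemma chainset_eq_residue_preimage:
  assumes B: "partial_perm n B" and C: "chainset n B C"
  shows "C = {b\<in>B. fst b mod n \<in> row_residues n C}"
proof
  show "C \<subseteq> {b\<in>B. fst b mod n \<in> row_residues n C}"
    using C by (auto simp: chainset_def row_residues_def)
next
  show "{b\<in>B. fst b mod n \<in> row_residues n C} \<subseteq> C"
  proof
    fix b assume "b \<in> {b\<in>B. fst b mod n \<in> row_residues n C}"
    then obtain c where "b \<in> B" "c \<in> C" "fst c mod n = fst b mod n"
      by (auto simp: row_residues_def)
    moreover from this obtain k where "b = transl n k c"
      using partial_perm_same_row_residue[OF B, of c b] C by (auto simp: chainset_def)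
    ultimately show "b \<in> C" using C by (auto simp: chainset_def)
  qed
qed

lemma finite_channels:
  assumes n: "n > 0" and B: "partial_perm n B"
  shows "finite {C. is_channel n B C}"
proof -
  let ?S = "{C. is_channel n B C}"
  have "inj_on (row_residues n) ?S"
  proof (rule inj_onI)
    fix C1 C2 assume "C1 \<in> ?S" "C2 \<in> ?S" "row_residues n C1 = row_residues n C2"
    thus "C1 = C2" using chainset_eq_residue_preimage[OF B, of C1] chainset_eq_residue_preimage[OF B, of C2]
      by (simp add: is_channel_def)
  qed
  moreover have "row_residues n ` ?S \<subseteq> Pow {0..<n}" using row_residues_subset[OF n] by auto
  hence "finite (row_residues n ` ?S)" by (rule finite_subset) simp
  ultimately show ?thesis using finite_imageD by blast
qed

definition sw_most_channel :: "int \<Rightarrow> (int \<times> int) set \<Rightarrow> (int \<times> int) set \<Rightarrow> bool" where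
  "sw_most_channel n B C \<longleftrightarrow>
     is_channel n B C \<and> (\<forall>C'. is_channel n B C' \<longrightarrow> (\<forall>b\<in>C. \<exists>b'\<in>C'. sw b b'))"

lemma channel_sw_of_finite_family:
  assumes n: "n > 0" and B: "partial_perm n B"
  shows "finite F \<Longrightarrow> F \<subseteq> {C. is_channel n B C} \<Longrightarrow>
     \<exists>C. is_channel n B C \<and> (\<forall>C'\<in>F. \<forall>b\<in>C. \<exists>b'\<in>C'. sw b b')"
proof (induction F rule: finite_induct)
  case empty thus ?case using channel_exists[OF n B] by auto
next
  case (insert D F)
  then obtain C where C: "is_channel n B C" "\<forall>C'\<in>F. \<forall>b\<in>C. \<exists>b'\<in>C'. sw b b'" by auto
  have D: "is_channel n B D" using insert by auto
  have "\<exists>b'\<in>C'. sw b b'" if C': "C' \<in> insert D F" and b: "b \<in> sw_meet C D" for C' b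
  proof (cases "C' = D")
    case True thus ?thesis using b sw_refl unfolding sw_meet_def by blast
  next
    case False
    hence C'F: "C' \<in> F" using C' by auto
    from b obtain x where "x \<in> C" "sw b x" unfolding sw_meet_def using sw_refl by blast
    thus ?thesis using C(2) C'F sw_trans by blast
  qed
  thus ?case using is_channel_sw_meet[OF n B C(1) D] by blast
qed

lemma sw_chain_eq:
  assumes "partial_perm n B" "x \<in> B" "y \<in> B" "nw x y \<or> nw y x" "sw x y"
  shows "x = y"
proof -
  have "fst x = fst y \<or> snd x = snd y" using assms(4,5) by (auto simp: nw_def sw_def)
  thus ?thesis using partial_perm_fst_eq[OF assms(1-3)] partial_perm_snd_eq[OF assms(1-3)] by blast
qed

lemma ex1_sw_most_channel:
  assumes n: "n > 0" and B: "partial_perm n B"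
  shows "\<exists>!C. sw_most_channel n B C"
proof -
  obtain C where "is_channel n B C" "\<forall>C'\<in>{C. is_channel n B C}. \<forall>b\<in>C. \<exists>b'\<in>C'. sw b b'"
    using channel_sw_of_finite_family[OF n B finite_channels[OF n B]] by blast
  hence ex: "sw_most_channel n B C" unfolding sw_most_channel_def by auto
  have "C1 \<subseteq> C2" if 1: "sw_most_channel n B C1" and 2: "sw_most_channel n B C2" for C1 C2
  proof
    fix b assume b: "b \<in> C1"
    obtain b' where b': "b' \<in> C2" "sw b b'" using 1 2 b unfolding sw_most_channel_def by blast
    obtain b'' where b'': "b'' \<in> C1" "sw b' b''" using 1 2 b' unfolding sw_most_channel_def by blast
    have C1: "chainset n B C1" using 1 by (simp add: sw_most_channel_def is_channel_def)
    have "b = b''"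
    proof (rule sw_chain_eq[OF B])
      show "b \<in> B" "b'' \<in> B" using C1 b b'' by (auto simp: chainset_def)
      show "nw b b'' \<or> nw b'' b" using C1 b b'' by (simp add: chainset_def)
      show "sw b b''" using b' b'' sw_trans by blast
    qed
    hence "b = b'" using b' b'' sw_antisym by blast
    thus "b \<in> C2" using b' by simp
  qed
  thus ?thesis using ex by blast
qed

lemma sw_most_channel_sw_channel:
  assumes "n > 0" "partial_perm n B"
  shows "sw_most_channel n B (sw_channel n B)"
proof -
  have "sw_channel n B = (THE C. sw_most_channel n B C)"
    unfolding sw_channel_def sw_most_channel_def by simp
  thus ?thesis using theI'[OF ex1_sw_most_channel[OF assms]] by simp
qed

section \<open>Channel density\<close>

lemma partial_perm_multiple_period:
  assumes "partial_perm n B" shows "partial_perm (q * n) B"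
proof -
  have "transl (q * n) k x = transl n (k * q) x" for k x by (simp add: transl_def algebra_simps)
  thus ?thesis using assms unfolding partial_perm_def transl_invariant_def by simp
qed

lemma chainset_transl_image:
  assumes "partial_perm n B" "chainset p B X"
  shows "chainset p B (transl n k ` X)"
  unfolding chainset_def
proof (intro conjI ballI allI)
  show "transl n k ` X \<subseteq> B" using assms partial_perm_transl by (fastforce simp: chainset_def)
next
  fix b l assume "b \<in> transl n k ` X"
  then obtain x where x: "x \<in> X" "b = transl n k x" by auto
  have "transl p l b = transl n k (transl p l x)" using x(2) by (simp add: transl_def algebra_simps)
  moreover have "transl p l x \<in> X" using assms(2) x(1) by (simp add: chainset_def)
  ultimately show "transl p l b \<in> transl n k ` X" by blast
next
  fix a b assume "a \<in> transl n k ` X" "b \<in> transl n k ` X"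
  then obtain x y where "x \<in> X" "y \<in> X" "a = transl n k x" "b = transl n k y" by blast
  thus "nw a b \<or> nw b a" using assms(2) by (simp add: chainset_def)
qed

lemma card_row_residues_transl_image:
  assumes "p > 0"
  shows "card (row_residues p (transl n k ` X)) = card (row_residues p X)"
proof -
  have "card (row_residues p (transl n k ` X)) = card ((\<lambda>x. (fst x + k * n) mod p) ` X)"
    unfolding row_residues_def image_image by simp
  also have "\<dots> = card ((\<lambda>x. fst x mod p) ` X)"
    by (rule card_image_eq_kernel) (metis add_diff_cancel_right' mod_add_cong mod_diff_cong)
  finally show ?thesis by (simp add: row_residues_def)
qed

lemma sw_most_channel_transl_image:
  assumes p: "p > 0" and B: "partial_perm p B" and Bn: "partial_perm n B"
    and G: "sw_most_channel p B G"
  shows "sw_most_channel p B (transl n k ` G)"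
proof -
  have ch: "is_channel p B (transl n k ` X)" if X: "is_channel p B X" for X k
  proof (rule is_channel_if_card_row_residues[OF p B X])
    show "chainset p B (transl n k ` X)"
      using chainset_transl_image[OF Bn] X by (simp add: is_channel_def)
  qed (simp add: card_row_residues_transl_image[OF p])
  show ?thesis unfolding sw_most_channel_def
  proof (intro conjI allI impI ballI)
    show "is_channel p B (transl n k ` G)" using ch G by (simp add: sw_most_channel_def)
    fix C' b assume C': "is_channel p B C'" and b: "b \<in> transl n k ` G"
    obtain x where x: "x \<in> G" "b = transl n k x" using b by auto
    obtain y where y: "y \<in> transl n (-k) ` C'" "sw x y"
      using G x ch[OF C', of "-k"] unfolding sw_most_channel_def by blast
    then obtain z where "z \<in> C'" "y = transl n (-k) z" by auto
    thus "\<exists>b'\<in>C'. sw b b'" using x y by (intro bexI[of _ z]) (auto simp del: sw_transl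
      dest: sw_transl[of n k, THEN iffD2])
  qed
qed

text \<open>By uniqueness, the southwest-most channel for a multiple period is invariant under the
  original period.\<close>

lemma sw_most_channel_multiple_period_chainset:
  assumes "q > 0" "n > 0" and B: "partial_perm n B" and G: "sw_most_channel (q * n) B G"
  shows "chainset n B G"
proof -
  have p: "q * n > 0" using assms by simp
  have Bq: "partial_perm (q * n) B" using partial_perm_multiple_period[OF B] .
  have "transl n k ` G = G" for k
    using ex1_sw_most_channel[OF p Bq] sw_most_channel_transl_image[OF p Bq B G] G by blast
  moreover have "chainset (q * n) B G" using G by (simp add: sw_most_channel_def is_channel_def)
  ultimately show ?thesis unfolding chainset_def by blast
qed

lemma card_row_residues_multiple_period:
  assumes n: "n > 0" and q: "q > 0" and G: "\<forall>b\<in>G. \<forall>k. transl n k b \<in> G"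
  shows "card (row_residues (q * n) G) = nat q * card (row_residues n G)"
proof -
  let ?h = "\<lambda>(a, s). s + a * n"
  have eq: "row_residues (q * n) G = ?h ` ({0..<q} \<times> row_residues n G)"
  proof (intro set_eqI iffI)
    fix r assume "r \<in> row_residues (q * n) G"
    then obtain x where x: "x \<in> G" "r = fst x mod (q * n)" by (auto simp: row_residues_def)
    have "r mod n = fst x mod n" using x(2) by (simp add: mod_mod_cancel)
    moreover have "0 \<le> r div n" using x(2) n q by (simp add: pos_imp_zdiv_nonneg_iff)
    moreover have "r < q * n" using x(2) n q by simp
    hence "r div n < q" using n
      by (smt (verit) minus_div_mult_eq_mod mult_right_less_imp_less pos_mod_sign)
    moreover have "r = r mod n + (r div n) * n" by simp
    ultimately show "r \<in> ?h ` ({0..<q} \<times> row_residues n G)"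
      using x(1) by (force simp: row_residues_def)
  next
    fix r assume "r \<in> ?h ` ({0..<q} \<times> row_residues n G)"
    then obtain a x where ax: "0 \<le> a" "a < q" "x \<in> G" "r = fst x mod n + a * n"
      by (auto simp: row_residues_def)
    define x' where "x' = transl n (a - fst x div n) x"
    have "x' \<in> G" using G ax(3) unfolding x'_def by blast
    have "a * n \<le> (q - 1) * n" using ax n by (intro mult_right_mono) auto
    hence "a * n + n \<le> q * n" by (simp add: algebra_simps)
    moreover have "0 \<le> a * n" "0 \<le> fst x mod n" "fst x mod n < n" using ax(1) n by simp_all
    ultimately have "0 \<le> r" "r < q * n" using ax(4) by linarith+
    moreover have "fst x' = r" unfolding x'_def using ax(4) by (simp add: algebra_simps minus_div_mult_eq_mod)
    ultimately have "fst x' mod (q * n) = r" by simp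
    thus "r \<in> row_residues (q * n) G" using \<open>x' \<in> G\<close> by (auto simp: row_residues_def)
  qed
  have "inj_on ?h ({0..<q} \<times> row_residues n G)"
  proof (rule inj_onI, clarsimp)
    fix a s a' s' assume "s \<in> row_residues n G" "s' \<in> row_residues n G" and e: "s + a * n = s' + a' * n"
    hence "0 \<le> s" "s < n" "0 \<le> s'" "s' < n" using n by (auto simp: row_residues_def)
    hence "(s + a * n) div n = a" "(s' + a' * n) div n = a'" using n by simp_all
    thus "a = a' \<and> s = s'" using e by simp
  qed
  thus ?thesis using card_image eq by (metis card_atLeastLessThan_int card_cartesian_product diff_0_right)
qed

lemma card_row_residues_chainset_multiple_period:
  assumes n: "n > 0" and q: "q > 0" and B: "partial_perm n B" and C: "is_channel n B C"
      and X: "chainset (q * n) B X"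
  shows "card (row_residues (q * n) X) \<le> nat q * card (row_residues n C)"
proof -
  have p: "q * n > 0" using n q by simp
  have Bq: "partial_perm (q * n) B" using partial_perm_multiple_period[OF B] .
  obtain G where G: "sw_most_channel (q * n) B G" using ex1_sw_most_channel[OF p Bq] by blast
  have Gn: "chainset n B G" using sw_most_channel_multiple_period_chainset[OF q n B G] .
  have "card (row_residues (q * n) X) \<le> card (row_residues (q * n) G)"
    using card_row_residues_le_channel[OF p Bq _ X] G by (simp add: sw_most_channel_def)
  also have "\<dots> = nat q * card (row_residues n G)"
    using card_row_residues_multiple_period[OF n q] Gn by (simp add: chainset_def)
  also have "\<dots> \<le> nat q * card (row_residues n C)"
    using card_row_residues_le_channel[OF n B C Gn] by simp
  finally show ?thesis .
qed

section \<open>Northwest paths\<close>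

definition nw_path :: "(int \<times> int) list \<Rightarrow> bool" where
  "nw_path bs \<longleftrightarrow> (\<forall>t. Suc t < length bs \<longrightarrow> snw (bs ! Suc t) (bs ! t))"

lemma nw_path_snw:
  assumes "nw_path bs" "j < length bs" "i < j"
  shows "snw (bs ! j) (bs ! i)"
  using assms(2,3)
proof (induction j)
  case (Suc j)
  have "snw (bs ! Suc j) (bs ! j)" using assms(1) Suc.prems by (simp add: nw_path_def)
  thus ?case using Suc snw_trans by (cases "i = j") auto
qed simp

lemma nw_path_nw:
  assumes "nw_path bs" "j < length bs" "i \<le> j"
  shows "nw (bs ! j) (bs ! i)"
  using nw_path_snw[OF assms(1,2)] assms(3) snw_imp_nw by (cases "i = j") auto

lemma nw_path_last_nw:
  assumes "nw_path bs" "y \<in> set bs"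
  shows "nw (last bs) y"
proof -
  obtain i where i: "i < length bs" "y = bs ! i" using assms(2) by (auto simp: in_set_conv_nth)
  hence "bs \<noteq> []" by auto
  thus ?thesis using nw_path_nw[OF assms(1), of "length bs - 1" i] i by (simp add: last_conv_nth)
qed

lemma nw_path_nw_hd:
  assumes "nw_path bs" "y \<in> set bs"
  shows "nw y (hd bs)"
proof -
  obtain i where i: "i < length bs" "y = bs ! i" using assms(2) by (auto simp: in_set_conv_nth)
  hence "bs \<noteq> []" by auto
  thus ?thesis using nw_path_nw[OF assms(1), of i 0] i by (simp add: hd_conv_nth)
qed

lemma nw_path_comparable:
  assumes "nw_path bs" "y \<in> set bs" "z \<in> set bs"
  shows "nw y z \<or> nw z y"
proof -
  obtain i j where "i < length bs" "y = bs ! i" "j < length bs" "z = bs ! j"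
    using assms(2,3) by (auto simp: in_set_conv_nth)
  thus ?thesis using nw_path_nw[OF assms(1)] by (cases "i \<le> j") auto
qed

lemma nw_path_distinct: "nw_path bs \<Longrightarrow> distinct bs"
  unfolding distinct_conv_nth by (metis nat_neq_iff nw_path_snw snw_def order.strict_iff_not)

lemma nw_path_Cons:
  assumes "nw_path bs" "bs \<noteq> []" "snw (hd bs) y"
  shows "nw_path (y # bs)"
  unfolding nw_path_def
proof (intro allI impI)
  fix t assume "Suc t < length (y # bs)"
  thus "snw ((y # bs) ! Suc t) ((y # bs) ! t)"
    using assms by (cases t) (auto simp: nw_path_def hd_conv_nth)
qed

lemma nw_path_tl: "nw_path bs \<Longrightarrow> nw_path (tl bs)"
  unfolding nw_path_def by (cases bs) auto

lemma nw_path_map_transl: "nw_path bs \<Longrightarrow> nw_path (map (transl n k) bs)"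
  unfolding nw_path_def by simp

lemma chainset_transl_closure_nw_path:
  assumes p: "p > 0" and B: "partial_perm p B"
    and bs: "set bs \<subseteq> B" "nw_path bs" and span: "snw (hd bs) (transl p 1 (last bs))"
  shows "chainset p B {transl p k y |k y. y \<in> set bs}"
  unfolding chainset_def
proof (intro conjI ballI allI)
  show "{transl p k y |k y. y \<in> set bs} \<subseteq> B" using bs(1) partial_perm_transl[OF B] by blast
next
  fix b k assume "b \<in> {transl p k y |k y. y \<in> set bs}"
  then obtain k' y where "b = transl p k' y" "y \<in> set bs" by blast
  hence "transl p k b = transl p (k + k') y" "y \<in> set bs" by simp_all
  thus "transl p k b \<in> {transl p k y |k y. y \<in> set bs}" by blast
next
  fix a b assume "a \<in> {transl p k y |k y. y \<in> set bs}" "b \<in> {transl p k y |k y. y \<in> set bs}"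
  then obtain k y l z where a: "a = transl p k y" "y \<in> set bs" and b: "b = transl p l z" "z \<in> set bs"
    by blast
  have lt: "nw (transl p k y) (transl p l z)" if "k < l" "y \<in> set bs" "z \<in> set bs" for k l y z
  proof -
    have "k * p + p \<le> l * p" using that p mult_right_mono[of "k + 1" l p] by (simp add: algebra_simps)
    moreover have "nw y (hd bs)" "nw (last bs) z"
      using nw_path_nw_hd[OF bs(2) that(2)] nw_path_last_nw[OF bs(2) that(3)] .
    ultimately show ?thesis using span by (auto simp: nw_def snw_def)
  qed
  show "nw a b \<or> nw b a"
    using lt[of k l y z] lt[of l k z y] nw_path_comparable[OF bs(2) a(2) b(2)] a b
    by (cases k l rule: linorder_cases) auto
qed

lemma nw_path_length_le:
  assumes n: "n > 0" and q: "q > 0" and B: "partial_perm n B" and C: "is_channel n B C"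
    and bs: "set bs \<subseteq> B" "nw_path bs" and span: "snw (hd bs) (transl (q * n) 1 (last bs))"
  shows "int (length bs) \<le> q * int (card (row_residues n C))"
proof -
  define p where "p = q * n"
  have p: "p > 0" using n q unfolding p_def by simp
  have Bp: "partial_perm p B" using partial_perm_multiple_period[OF B] p_def by simp
  define X where "X = {transl p k y |k y. y \<in> set bs}"
  have X: "chainset p B X"
    unfolding X_def using chainset_transl_closure_nw_path[OF p Bp bs] span p_def by simp
  have "inj_on (\<lambda>y. fst y mod p) (set bs)"
  proof (rule inj_onI)
    fix y z assume yz: "y \<in> set bs" "z \<in> set bs" "fst y mod p = fst z mod p"
    have "nw (last bs) y" "nw y (hd bs)" "nw (last bs) z" "nw z (hd bs)"
      using yz nw_path_last_nw[OF bs(2)] nw_path_nw_hd[OF bs(2)] by blast+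
    hence "\<bar>fst y - fst z\<bar> < p" using span unfolding p_def by (auto simp: nw_def snw_def)
    hence "fst y = fst z" using eq_if_mod_eq_abs_less[OF p yz(3)] by simp
    thus "y = z" using partial_perm_fst_eq[OF B] yz bs(1) by blast
  qed
  moreover have "(\<lambda>y. fst y mod p) ` set bs \<subseteq> row_residues p X"
    unfolding row_residues_def X_def by (force intro: exI[of _ 0])
  ultimately have "length bs \<le> card (row_residues p X)"
    using card_mono[OF finite_row_residues[OF p]] card_image distinct_card[OF nw_path_distinct[OF bs(2)]]
    by metis
  also have "\<dots> \<le> nat q * card (row_residues n C)"
    using card_row_residues_chainset_multiple_period[OF n q B C] X unfolding p_def by simp
  finally have "int (length bs) \<le> int (nat q * card (row_residues n C))" by (rule of_nat_mono)
  thus ?thesis using q by simp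
qed

section \<open>The channel numbering and the function \<open>d\<close>\<close>

locale nonempty_partial_perm =
  fixes n :: int and B :: "(int \<times> int) set"
  assumes period_pos: "n > 0" and partial_perm: "partial_perm n B" and nonempty: "B \<noteq> {}"
begin

abbreviation "C \<equiv> sw_channel n B"
abbreviation "m \<equiv> card (row_residues n C)"
abbreviation "f \<equiv> chan_num n B"

lemmas transl_mem = partial_perm_transl[OF partial_perm]
lemmas fst_eq = partial_perm_fst_eq[OF partial_perm]
lemmas snd_eq = partial_perm_snd_eq[OF partial_perm]

lemma channel_sw_most: "sw_most_channel n B C"
  using sw_most_channel_sw_channel[OF period_pos partial_perm] .

lemma channel_is_channel: "is_channel n B C"
  using channel_sw_most by (simp add: sw_most_channel_def)

lemma channel_chainset: "chainset n B C"
  using channel_is_channel by (simp add: is_channel_def)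

lemma channel_subset: "C \<subseteq> B"
  using channel_chainset by (simp add: chainset_def)

lemma channel_transl: "c \<in> C \<Longrightarrow> transl n k c \<in> C"
  using channel_chainset by (simp add: chainset_def)

lemma channel_residue: "c \<in> C \<Longrightarrow> fst c mod n \<in> row_residues n C"
  by (auto simp: row_residues_def)

lemma channel_snw:
  assumes "x \<in> C" "y \<in> C" "fst x < fst y"
  shows "snw x y"
proof -
  have "nw x y \<or> nw y x" using assms(1,2) channel_chainset by (simp add: chainset_def)
  hence "nw x y" using assms(3) by (auto simp: nw_def)
  moreover have "snd x \<noteq> snd y" using snd_eq assms channel_subset by blast
  ultimately show ?thesis using assms(3) by (auto simp: nw_def snw_def)
qed

lemma m_pos: "m > 0"
proof -
  obtain b where b: "b \<in> B" using nonempty by auto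
  have "chainset n B {transl n k b |k. True}" unfolding chainset_def
  proof (intro conjI ballI allI)
    show "{transl n k b |k. True} \<subseteq> B" using transl_mem[OF b] by auto
  next
    fix x k assume "x \<in> {transl n k b |k. True}"
    thus "transl n k x \<in> {transl n k b |k. True}" by auto
  next
    fix x y assume "x \<in> {transl n k b |k. True}" "y \<in> {transl n k b |k. True}"
    then obtain k l where "x = transl n k b" "y = transl n l b" by auto
    moreover have "k * n \<le> l * n \<or> l * n \<le> k * n" by linarith
    ultimately show "nw x y \<or> nw y x" by (auto simp: nw_def)
  qed
  hence "card (row_residues n {transl n k b |k. True}) \<le> m"
    using card_row_residues_le_channel[OF period_pos partial_perm channel_is_channel] by blast
  moreover have "row_residues n {transl n k b |k. True} \<noteq> {}" unfolding row_residues_def by blast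
  hence "card (row_residues n {transl n k b |k. True}) > 0"
    using finite_row_residues[OF period_pos] by (simp add: card_gt_0_iff)
  ultimately show ?thesis by linarith
qed

lemma channel_nonempty: "C \<noteq> {}"
  using m_pos by (auto simp: row_residues_def)

definition residue_rank :: "int \<Rightarrow> nat" where
  "residue_rank r = card {r' \<in> row_residues n C. r' < r}"

lemma residue_rank_less:
  "r1 \<in> row_residues n C \<Longrightarrow> r2 \<in> row_residues n C \<Longrightarrow> r1 < r2 \<Longrightarrow> residue_rank r1 < residue_rank r2"
  unfolding residue_rank_def by (rule psubset_card_mono) (auto simp: finite_row_residues[OF period_pos])

lemma residue_rank_bound: "r \<in> row_residues n C \<Longrightarrow> residue_rank r < m"
  unfolding residue_rank_def by (rule psubset_card_mono) (auto simp: finite_row_residues[OF period_pos])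

lemma residue_rank_image: "residue_rank ` row_residues n C = {0..<m}"
proof -
  have "inj_on residue_rank (row_residues n C)"
  proof (rule inj_onI)
    fix x y assume "x \<in> row_residues n C" "y \<in> row_residues n C" "residue_rank x = residue_rank y"
    thus "x = y" using residue_rank_less[of x y] residue_rank_less[of y x] by (cases x y rule: linorder_cases) auto
  qed
  hence "card (residue_rank ` row_residues n C) = card {0..<m}" by (simp add: card_image)
  moreover have "residue_rank ` row_residues n C \<subseteq> {0..<m}" using residue_rank_bound by auto
  ultimately show ?thesis by (simp add: card_subset_eq)
qed

definition std_num :: "int \<times> int \<Rightarrow> int" where
  "std_num c = int m * (fst c div n) + int (residue_rank (fst c mod n))"

lemma std_num_transl: "std_num (transl n k c) = std_num c + k * int m"
  using period_pos by (simp add: std_num_def algebra_simps)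

lemma std_num_less:
  assumes "x \<in> C" "y \<in> C" "fst x < fst y"
  shows "std_num x < std_num y"
proof -
  let ?dx = "fst x div n" and ?dy = "fst y div n" and ?rx = "fst x mod n" and ?ry = "fst y mod n"
  have rx: "?rx \<in> row_residues n C" and ry: "?ry \<in> row_residues n C" using channel_residue assms by auto
  have "?dx \<le> ?dy" using assms(3) period_pos by (simp add: zdiv_mono1)
  then consider "?dx = ?dy" | "?dx < ?dy" by linarith
  thus ?thesis
  proof cases
    case 1
    have "fst y = ?dy * n + ?ry" by simp
    hence "fst y = ?dx * n + ?ry" using 1 by simp
    moreover have "fst x = ?dx * n + ?rx" by simp
    ultimately have "?rx < ?ry" using assms(3) by linarith
    thus ?thesis using residue_rank_less[OF rx ry] 1 by (simp add: std_num_def)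
  next
    case 2
    have "int m * ?dx + int (residue_rank ?rx) < int m * (?dx + 1)"
      using residue_rank_bound[OF rx] by (simp add: algebra_simps)
    also have "\<dots> \<le> int m * ?dy" using 2 by (intro mult_left_mono) auto
    finally show ?thesis by (simp add: std_num_def add.commute add_strict_increasing)
  qed
qed

lemma inj_on_std_num: "inj_on std_num C"
proof (rule inj_onI)
  fix x y assume xy: "x \<in> C" "y \<in> C" "std_num x = std_num y"
  hence "fst x = fst y" using std_num_less[of x y] std_num_less[of y x] by (cases "fst x" "fst y" rule: linorder_cases) auto
  thus "x = y" using fst_eq xy channel_subset by blast
qed

lemma std_num_image: "std_num ` C = UNIV"
proof -
  have "z \<in> std_num ` C" for z
  proof -
    have "0 \<le> z mod int m" "z mod int m < int m" using m_pos by simp_all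
    hence "nat (z mod int m) \<in> residue_rank ` row_residues n C"
      unfolding residue_rank_image by (simp add: nat_less_iff)
    then obtain e where e: "e \<in> C" "residue_rank (fst e mod n) = nat (z mod int m)"
      by (auto simp: row_residues_def)
    define c where "c = transl n (z div int m - fst e div n) e"
    have "c \<in> C" using channel_transl e(1) unfolding c_def by blast
    moreover have "std_num c = z"
      unfolding c_def std_num_transl using e(2) m_pos by (simp add: std_num_def algebra_simps)
    ultimately show ?thesis by (rule rev_image_eqI[OF _ sym])
  qed
  thus ?thesis by blast
qed

lemma std_num_less_iff:
  assumes "x \<in> C" "y \<in> C"
  shows "std_num x < std_num y \<longleftrightarrow> fst x < fst y"
proof
  assume lt: "std_num x < std_num y"
  show "fst x < fst y"
  proof (rule ccontr)
    assume "\<not> fst x < fst y"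
    hence "fst y < fst x \<or> y = x" using fst_eq assms channel_subset by fastforce
    thus False using std_num_less[OF assms(2,1)] lt by auto
  qed
qed (rule std_num_less[OF assms])

lemma chan_num_props:
  "bij_betw f C (UNIV :: int set) \<and> (\<forall>x\<in>C. \<forall>y\<in>C. snw x y \<longrightarrow> f x < f y)"
proof -
  have "bij_betw std_num C (UNIV :: int set)"
    using inj_on_std_num std_num_image by (simp add: bij_betw_def)
  moreover have "\<forall>x\<in>C. \<forall>y\<in>C. snw x y \<longrightarrow> std_num x < std_num y"
    using std_num_less by (auto simp: snw_def)
  ultimately show ?thesis unfolding chan_num_def by (rule someI[where x = std_num, OF conjI])
qed

lemma chan_num_surj: "\<exists>c\<in>C. f c = v"
  using chan_num_props unfolding bij_betw_def by (metis UNIV_I imageE)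

text \<open>Any order-preserving numbering of the channel by \<open>\<int>\<close> differs from the standard one by a
  constant, since an increasing bijection of \<open>\<int>\<close> is a shift.\<close>

lemma chan_num_eq_std_num: "\<exists>a. \<forall>c\<in>C. f c = std_num c + a"
proof -
  define g where "g = f \<circ> inv_into C std_num"
  have inv: "inv_into C std_num z \<in> C" "std_num (inv_into C std_num z) = z" for z
    using std_num_image inv_into_into[of z std_num C] f_inv_into_f[of z std_num C] by simp_all
  have g: "g (std_num c) = f c" if "c \<in> C" for c
    using inj_on_std_num that unfolding g_def by simp
  have mono: "\<forall>x\<in>C. \<forall>y\<in>C. snw x y \<longrightarrow> f x < f y" using chan_num_props by blast
  have "strict_mono g"
  proof (rule strict_monoI)
    fix x y :: int assume "x < y"
    hence "fst (inv_into C std_num x) < fst (inv_into C std_num y)"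
      using std_num_less_iff[OF inv(1) inv(1)] inv(2) by simp
    hence "snw (inv_into C std_num x) (inv_into C std_num y)" using channel_snw inv(1) by blast
    thus "g x < g y" using mono inv(1) unfolding g_def by simp
  qed
  moreover have "surj g" unfolding surj_def
  proof
    fix z
    obtain c where "c \<in> C" "f c = z" using chan_num_surj by blast
    hence "z = g (std_num c)" using g by simp
    thus "\<exists>x. z = g x" ..
  qed
  ultimately have shift: "g z = g 0 + z" for z by (rule strict_mono_surj_int_eq_shift)
  have "f c = std_num c + g 0" if "c \<in> C" for c using shift[of "std_num c"] g[OF that] by linarith
  thus ?thesis by blast
qed

lemma chan_num_less_iff:
  assumes "x \<in> C" "y \<in> C"
  shows "f x < f y \<longleftrightarrow> fst x < fst y"
proof -
  obtain a where "\<forall>c\<in>C. f c = std_num c + a" using chan_num_eq_std_num by blast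
  thus ?thesis using std_num_less_iff[OF assms] assms by simp
qed

lemma chan_num_transl:
  assumes "c \<in> C"
  shows "f (transl n k c) = f c + k * int m"
proof -
  obtain a where "\<forall>c\<in>C. f c = std_num c + a" using chan_num_eq_std_num by blast
  thus ?thesis using channel_transl[OF assms] assms by (simp add: std_num_transl)
qed
end

context nonempty_partial_perm
begin

definition path_values :: "int \<times> int \<Rightarrow> int set" where
  "path_values x = {f (last bs) + int (length bs) - 1 | bs.
     bs \<noteq> [] \<and> hd bs = x \<and> set bs \<subseteq> B \<and> last bs \<in> C \<and> nw_path bs}"

abbreviation "d \<equiv> dval n B"

lemma dval_eq_Sup: "d x = Sup (path_values x)"
  unfolding dval_def path_values_def nw_path_def by simp

lemma path_values_nonempty:
  assumes x: "x \<in> B"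
  shows "path_values x \<noteq> {}"
proof -
  obtain c0 where c0: "c0 \<in> C" using channel_nonempty by auto
  define k where "k = - (\<bar>fst x - fst c0\<bar> + \<bar>snd x - snd c0\<bar> + 1)"
  define c where "c = transl n k c0"
  have cC: "c \<in> C" using channel_transl c0 unfolding c_def by blast
  have "k * n \<le> k" using mult_left_mono_neg[of 1 n k] period_pos unfolding k_def by simp
  moreover have "- (fst x - fst c0) \<le> \<bar>fst x - fst c0\<bar>" "- (snd x - snd c0) \<le> \<bar>snd x - snd c0\<bar>"
    "0 \<le> \<bar>fst x - fst c0\<bar>" "0 \<le> \<bar>snd x - snd c0\<bar>" by simp_all
  ultimately have "fst c0 + k * n < fst x" "snd c0 + k * n < snd x" using k_def by linarith+
  hence "snw c x" unfolding c_def snw_def by simp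
  hence "[x, c] \<noteq> [] \<and> hd [x, c] = x \<and> set [x, c] \<subseteq> B \<and> last [x, c] \<in> C \<and> nw_path [x, c]"
    using x cC channel_subset by (auto simp: nw_path_def)
  hence "f (last [x, c]) + int (length [x, c]) - 1 \<in> path_values x" unfolding path_values_def by blast
  thus ?thesis by auto
qed

definition channel_reps :: "(int \<times> int) set" where
  "channel_reps = {e \<in> C. 0 \<le> fst e \<and> fst e < n}"

lemma finite_channel_reps: "finite channel_reps"
proof -
  have "inj_on fst channel_reps"
  proof (rule inj_onI)
    fix x y assume "x \<in> channel_reps" "y \<in> channel_reps" "fst x = fst y"
    thus "x = y" using fst_eq channel_subset unfolding channel_reps_def by blast
  qed
  moreover have "fst ` channel_reps \<subseteq> {0..<n}" unfolding channel_reps_def by auto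
  ultimately show ?thesis using finite_subset finite_imageD by blast
qed

text \<open>A path from \<open>x\<close> to the translate of \<open>e\<close> by \<open>j\<close> periods spans less than \<open>q\<close> periods, so
  channel density bounds its length by \<open>q m\<close>; and \<open>f\<close> grows by \<open>j m\<close>.\<close>

lemma path_value_le:
  assumes x: "x \<in> B" and v: "v \<in> path_values x"
  shows "\<exists>e\<in>channel_reps. v \<le> f e + (max (fst x - fst e) (snd x - snd e) div n + 1) * int m - 1"
proof -
  obtain bs where bs: "bs \<noteq> []" "hd bs = x" "set bs \<subseteq> B" "last bs \<in> C" "nw_path bs"
    and v: "v = f (last bs) + int (length bs) - 1" using v unfolding path_values_def by blast
  define c where "c = last bs"
  define j where "j = fst c div n"
  define e where "e = transl n (- j) c"
  have cC: "c \<in> C" using bs c_def by simp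
  have eC: "e \<in> C" using channel_transl cC unfolding e_def by blast
  have "fst e = fst c mod n" unfolding e_def j_def by (simp add: algebra_simps minus_div_mult_eq_mod)
  hence e0: "e \<in> channel_reps" using eC period_pos unfolding channel_reps_def by simp
  have ce: "c = transl n j e" unfolding e_def by simp
  have fc: "f c = f e + j * int m" using chan_num_transl[OF eC, of j] ce by simp
  have cx: "nw c x" using nw_path_last_nw[OF bs(5) hd_in_set[OF bs(1)]] bs(2) unfolding c_def by simp
  define D where "D = max (fst x - fst e) (snd x - snd e)"
  have sc: "snd c = snd e + j * n" "fst c = fst e + j * n" using ce by simp_all
  have "j * n \<le> D" using cx sc unfolding D_def nw_def by auto
  hence "(j * n) div n \<le> D div n" using period_pos by (rule zdiv_mono1)
  hence jD: "j \<le> D div n" using period_pos by simp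
  define q where "q = D div n - j + 1"
  have q: "q > 0" using jD unfolding q_def by simp
  have "D < D div n * n + n" using period_pos by (metis div_mult_mod_eq add_less_cancel_left pos_mod_bound)
  moreover have "q * n = D div n * n - j * n + n" unfolding q_def by (simp add: algebra_simps)
  moreover have "fst x - fst e \<le> D" "snd x - snd e \<le> D" unfolding D_def by simp_all
  ultimately have "snw (hd bs) (transl (q * n) 1 (last bs))" using bs(2) sc unfolding c_def[symmetric]
    by (simp add: snw_def)
  hence "int (length bs) \<le> q * int m"
    using nw_path_length_le[OF period_pos q partial_perm channel_is_channel bs(3,5)] by simp
  moreover have "j * int m + q * int m = (D div n + 1) * int m" unfolding q_def by (simp add: algebra_simps)
  ultimately have "v \<le> f e + (D div n + 1) * int m - 1" using v fc unfolding c_def by linarith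
  thus ?thesis using e0 unfolding D_def by blast
qed

lemma bdd_above_path_values:
  assumes "x \<in> B"
  shows "bdd_above (path_values x)"
proof -
  define g where "g e = f e + (max (fst x - fst e) (snd x - snd e) div n + 1) * int m - 1" for e
  have "v \<le> Max (g ` channel_reps)" if v: "v \<in> path_values x" for v
  proof -
    obtain e where "e \<in> channel_reps" "v \<le> g e" using path_value_le[OF assms v] unfolding g_def by blast
    moreover have "g e \<le> Max (g ` channel_reps)" using finite_channel_reps \<open>e \<in> channel_reps\<close> by simp
    ultimately show ?thesis by linarith
  qed
  thus ?thesis by (auto simp: bdd_above_def)
qed

lemma dval_mem: "x \<in> B \<Longrightarrow> d x \<in> path_values x"
  using Sup_int_mem[OF path_values_nonempty bdd_above_path_values] dval_eq_Sup by simp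

lemma dval_ge_path:
  assumes "bs \<noteq> []" "set bs \<subseteq> B" "last bs \<in> C" "nw_path bs"
  shows "f (last bs) + int (length bs) - 1 \<le> d (hd bs)"
proof -
  have "f (last bs) + int (length bs) - 1 \<in> path_values (hd bs)"
    using assms unfolding path_values_def by blast
  moreover have "hd bs \<in> B" using assms(1,2) hd_in_set by blast
  ultimately show ?thesis using cSup_upper[OF _ bdd_above_path_values] dval_eq_Sup by simp
qed

lemma dval_path:
  assumes "x \<in> B"
  obtains bs where "bs \<noteq> []" "hd bs = x" "set bs \<subseteq> B" "last bs \<in> C" "nw_path bs"
    "d x = f (last bs) + int (length bs) - 1"
  using dval_mem[OF assms] unfolding path_values_def by blast

lemma dval_less:
  assumes x: "x \<in> B" and y: "y \<in> B" and "snw x y"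
  shows "d x < d y"
proof -
  obtain bs where bs: "bs \<noteq> []" "hd bs = x" "set bs \<subseteq> B" "last bs \<in> C" "nw_path bs"
    "d x = f (last bs) + int (length bs) - 1" using dval_path[OF x] by blast
  have "nw_path (y # bs)" using nw_path_Cons[OF bs(5,1)] assms(3) bs(2) by simp
  hence "f (last (y # bs)) + int (length (y # bs)) - 1 \<le> d y"
    using dval_ge_path[of "y # bs"] bs(1,3,4) y by simp
  thus ?thesis using bs(1,6) by simp
qed

text \<open>Dropping the first ball of an optimal path, or (for a path of length one) stepping back
  along the channel, decreases \<open>d\<close> by exactly one.\<close>

lemma dval_pred:
  assumes x: "x \<in> B"
  shows "\<exists>z\<in>B. snw z x \<and> d z = d x - 1"
proof -
  obtain bs where bs: "bs \<noteq> []" "hd bs = x" "set bs \<subseteq> B" "last bs \<in> C" "nw_path bs"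
    "d x = f (last bs) + int (length bs) - 1" using dval_path[OF x] by blast
  then obtain ys where ys: "bs = x # ys" by (cases bs) auto
  have "\<exists>z\<in>B. snw z x \<and> d x - 1 \<le> d z"
  proof (cases ys)
    case (Cons z zs)
    have zB: "z \<in> B" using bs(3) ys Cons by simp
    have "snw z x" using bs(5) ys Cons by (auto simp: nw_path_def)
    moreover have "f (last ys) + int (length ys) - 1 \<le> d z"
      using dval_ge_path[of ys] bs(3,4) nw_path_tl[OF bs(5)] ys Cons by simp
    hence "d x - 1 \<le> d z" using bs(6) ys Cons by simp
    ultimately show ?thesis using zB by blast
  next
    case Nil
    hence xC: "x \<in> C" and dx: "d x = f x" using bs(4,6) ys by simp_all
    obtain e where e: "e \<in> C" "f e = f x - 1" using chan_num_surj by blast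
    hence se: "snw e x" using chan_num_less_iff[OF e(1) xC] channel_snw[OF e(1) xC] by simp
    have eB: "e \<in> B" using e channel_subset by auto
    have "f e \<le> d e" using dval_ge_path[of "[e]"] eB e(1) by (simp add: nw_path_def)
    thus ?thesis using dx e(2) eB se by auto
  qed
  then obtain z where "z \<in> B" "snw z x" "d x - 1 \<le> d z" by blast
  moreover have "d z < d x" using dval_less[OF \<open>z \<in> B\<close> x \<open>snw z x\<close>] .
  ultimately show ?thesis by (intro bexI[of _ z]) auto
qed

lemma dval_below:
  assumes x: "x \<in> B" and t: "t < d x"
  shows "\<exists>z\<in>B. snw z x \<and> d z = t"
proof -
  have "\<forall>x\<in>B. d x = t + 1 + int k \<longrightarrow> (\<exists>z\<in>B. snw z x \<and> d z = t)" for k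
  proof (induction k)
    case 0 show ?case using dval_pred by fastforce
  next
    case (Suc k)
    show ?case
    proof (intro ballI impI)
      fix x assume x: "x \<in> B" "d x = t + 1 + int (Suc k)"
      obtain z1 where z1: "z1 \<in> B" "snw z1 x" "d z1 = d x - 1" using dval_pred[OF x(1)] by blast
      then obtain z where "z \<in> B" "snw z z1" "d z = t" using Suc x(2) by auto
      thus "\<exists>z\<in>B. snw z x \<and> d z = t" using z1 snw_trans by blast
    qed
  qed
  moreover have "d x = t + 1 + int (nat (d x - t - 1))" using t by simp
  ultimately show ?thesis using x by blast
qed

lemma dval_transl_ge:
  assumes x: "x \<in> B"
  shows "d x + k * int m \<le> d (transl n k x)"
proof -
  obtain bs where bs: "bs \<noteq> []" "hd bs = x" "set bs \<subseteq> B" "last bs \<in> C" "nw_path bs"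
    "d x = f (last bs) + int (length bs) - 1" using dval_path[OF x] by blast
  let ?bs = "map (transl n k) bs"
  have "?bs \<noteq> []" "set ?bs \<subseteq> B" "last ?bs \<in> C" "nw_path ?bs"
    using bs transl_mem channel_transl nw_path_map_transl by (auto simp: last_map)
  hence "f (last ?bs) + int (length ?bs) - 1 \<le> d (transl n k x)"
    using dval_ge_path bs(1,2) by (metis hd_map)
  moreover have "f (last ?bs) = f (last bs) + k * int m"
    using chan_num_transl[OF bs(4)] bs(1) by (simp add: last_map)
  ultimately show ?thesis using bs(6) by simp
qed

lemma dval_transl: "x \<in> B \<Longrightarrow> d (transl n k x) = d x + k * int m"
  using dval_transl_ge[of x k] dval_transl_ge[OF transl_mem, of x k "-k"] by simp

end

section \<open>Levels and the forward step\<close>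

definition level_succ :: "int \<Rightarrow> (int \<times> int) set \<Rightarrow> int \<times> int \<Rightarrow> int \<times> int \<Rightarrow> bool" where
  "level_succ n B x y \<longleftrightarrow> (\<exists>t. x \<in> level n B t \<and> y \<in> level n B t \<and> fst x < fst y
      \<and> \<not> (\<exists>z\<in>level n B t. fst x < fst z \<and> fst z < fst y))"

lemma fw_eq_level_succ: "fw n B = {(fst y, snd x) | x y. level_succ n B x y}"
  unfolding fw_def level_succ_def by force

context nonempty_partial_perm
begin

lemma level_iff: "x \<in> level n B t \<longleftrightarrow> x \<in> B \<and> d x = t" by (simp add: level_def)

lemma level_snd_less:
  assumes "x \<in> level n B t" "y \<in> level n B t" "fst x < fst y"
  shows "snd y < snd x"
proof (rule ccontr)
  assume nl: "\<not> snd y < snd x"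
  have xB: "x \<in> B" "y \<in> B" using assms level_iff by auto
  have "x \<noteq> y" using assms(3) by auto
  hence "snd x \<noteq> snd y" using snd_eq xB by blast
  hence "snw x y" using assms(3) nl by (auto simp: snw_def)
  hence "d x < d y" using dval_less xB by blast
  thus False using assms level_iff by simp
qed

lemma level_snd_le:
  assumes "x \<in> level n B t" "y \<in> level n B t" "fst x \<le> fst y"
  shows "snd y \<le> snd x"
  using level_snd_less[OF assms(1,2)] assms
  by (cases "fst x = fst y") (auto simp: level_iff dest: fst_eq)

lemma level_fst_less:
  assumes "x \<in> level n B t" "y \<in> level n B t" "snd y < snd x"
  shows "fst x < fst y"
proof (rule ccontr)
  assume "\<not> fst x < fst y"
  hence "fst y \<le> fst x" by simp
  hence "snd x \<le> snd y" using level_snd_le assms by blast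
  thus False using assms by simp
qed

lemma level_transl: "x \<in> level n B t \<Longrightarrow> transl n k x \<in> level n B (t + k * int m)"
  using dval_transl transl_mem by (auto simp: level_iff)

lemma finite_level: "finite (level n B t)"
proof -
  have "inj_on (\<lambda>x. fst x mod n) (level n B t)"
  proof (rule inj_onI)
    fix x y assume xy: "x \<in> level n B t" "y \<in> level n B t" "fst x mod n = fst y mod n"
    then obtain k where k: "y = transl n k x"
      using partial_perm_same_row_residue[OF partial_perm] level_iff by blast
    hence "d y = d x + k * int m" using dval_transl xy level_iff by blast
    hence "k * int m = 0" using xy level_iff by simp
    hence "k = 0" using m_pos by simp
    thus "x = y" using k by simp
  qed
  moreover have "(\<lambda>x. fst x mod n) ` level n B t \<subseteq> {0..<n}" using period_pos by auto
  hence "finite ((\<lambda>x. fst x mod n) ` level n B t)" using finite_subset by blast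
  ultimately show ?thesis using finite_imageD by blast
qed

definition has_later :: "int \<times> int \<Rightarrow> bool" where
  "has_later x \<longleftrightarrow> (\<exists>z\<in>level n B (d x). fst x < fst z)"

definition has_earlier :: "int \<times> int \<Rightarrow> bool" where
  "has_earlier y \<longleftrightarrow> (\<exists>z\<in>level n B (d y). fst z < fst y)"

lemma level_succD:
  assumes "level_succ n B x y"
  shows "x \<in> B" "y \<in> B" "d y = d x" "fst x < fst y" "snd y < snd x"
    "\<And>z. z \<in> level n B (d x) \<Longrightarrow> fst x < fst z \<Longrightarrow> fst y \<le> fst z"
    "\<And>z. z \<in> level n B (d x) \<Longrightarrow> fst z < fst y \<Longrightarrow> fst z \<le> fst x"
proof -
  obtain t where t: "x \<in> level n B t" "y \<in> level n B t" "fst x < fst y"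
    "\<not> (\<exists>z\<in>level n B t. fst x < fst z \<and> fst z < fst y)" using assms unfolding level_succ_def by blast
  show "x \<in> B" "y \<in> B" "d y = d x" "fst x < fst y" using t level_iff by auto
  show "snd y < snd x" using level_snd_less t by blast
  have dt: "d x = t" using t level_iff by simp
  show "fst y \<le> fst z" if "z \<in> level n B (d x)" "fst x < fst z" for z
  proof (rule ccontr)
    assume "\<not> fst y \<le> fst z"
    hence "fst z < fst y" by simp
    thus False using t(4) that dt by blast
  qed
  show "fst z \<le> fst x" if "z \<in> level n B (d x)" "fst z < fst y" for z
  proof (rule ccontr)
    assume "\<not> fst z \<le> fst x"
    hence "fst x < fst z" by simp
    thus False using t(4) that dt by blast
  qed
qed

lemma level_succ_exists:
  assumes x: "x \<in> B" and h: "has_later x"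
  shows "\<exists>y. level_succ n B x y"
proof -
  let ?S = "{z \<in> level n B (d x). fst x < fst z}"
  have fin: "finite (fst ` ?S)" using finite_level by simp
  have ne: "fst ` ?S \<noteq> {}" using h unfolding has_later_def by blast
  obtain y where y: "y \<in> ?S" "fst y = Min (fst ` ?S)" using Min_in[OF fin ne] by auto
  have le: "\<forall>z\<in>?S. fst y \<le> fst z" using y fin by simp
  have "x \<in> level n B (d x)" using x level_iff by simp
  moreover have "y \<in> level n B (d x)" "fst x < fst y" using y by auto
  moreover have "\<not> (\<exists>z\<in>level n B (d x). fst x < fst z \<and> fst z < fst y)" using le by force
  ultimately have "level_succ n B x y" unfolding level_succ_def by blast
  thus ?thesis by blast
qed

lemma level_succ_exists_pred:
  assumes y: "y \<in> B" and h: "has_earlier y"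
  shows "\<exists>x. level_succ n B x y"
proof -
  let ?S = "{z \<in> level n B (d y). fst z < fst y}"
  have fin: "finite (fst ` ?S)" using finite_level by simp
  have ne: "fst ` ?S \<noteq> {}" using h unfolding has_earlier_def by blast
  obtain x where x: "x \<in> ?S" "fst x = Max (fst ` ?S)" using Max_in[OF fin ne] by auto
  have le: "\<forall>z\<in>?S. fst z \<le> fst x" using x fin by simp
  have "y \<in> level n B (d y)" using y level_iff by simp
  moreover have "x \<in> level n B (d y)" "fst x < fst y" using x by auto
  moreover have "\<not> (\<exists>z\<in>level n B (d y). fst x < fst z \<and> fst z < fst y)" using le by force
  ultimately have "level_succ n B x y" unfolding level_succ_def by blast
  thus ?thesis by blast
qed

lemma level_succ_has_later:
  assumes "level_succ n B x y"
  shows "has_later x"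
proof -
  have "y \<in> level n B (d x)" using level_succD[OF assms] level_iff by simp
  thus ?thesis unfolding has_later_def using level_succD(4)[OF assms] by blast
qed

lemma level_succ_has_earlier:
  assumes "level_succ n B x y"
  shows "has_earlier y"
proof -
  have "x \<in> level n B (d y)" using level_succD[OF assms] level_iff by simp
  thus ?thesis unfolding has_earlier_def using level_succD(4)[OF assms] by blast
qed

lemma level_succ_unique:
  assumes "level_succ n B x y" "level_succ n B x y'"
  shows "y = y'"
proof -
  have "y' \<in> level n B (d x)" "y \<in> level n B (d x)"
    using level_succD[OF assms(2)] level_succD[OF assms(1)] level_iff by auto
  hence "fst y \<le> fst y'" "fst y' \<le> fst y" using level_succD[OF assms(1)] level_succD[OF assms(2)] by auto
  hence "fst y = fst y'" by simp
  thus ?thesis using fst_eq level_succD(2)[OF assms(1)] level_succD(2)[OF assms(2)] by blast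
qed

lemma level_succ_unique_pred:
  assumes "level_succ n B x y" "level_succ n B x' y"
  shows "x = x'"
proof -
  have dx: "d x = d x'" using level_succD[OF assms(1)] level_succD[OF assms(2)] by simp
  have "x' \<in> level n B (d x)" "x \<in> level n B (d x)"
    using level_succD[OF assms(2)] level_succD[OF assms(1)] dx level_iff by auto
  hence "fst x' \<le> fst x" "fst x \<le> fst x'" using level_succD[OF assms(1)] level_succD[OF assms(2)] dx by auto
  hence "fst x = fst x'" by simp
  thus ?thesis using fst_eq level_succD(1)[OF assms(1)] level_succD(1)[OF assms(2)] by blast
qed

lemma level_succ_transl:
  assumes "level_succ n B x y"
  shows "level_succ n B (transl n k x) (transl n k y)"
proof -
  obtain t where t: "x \<in> level n B t" "y \<in> level n B t" "fst x < fst y"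
    "\<not> (\<exists>z\<in>level n B t. fst x < fst z \<and> fst z < fst y)" using assms unfolding level_succ_def by blast
  have "transl n k x \<in> level n B (t + k * int m)" "transl n k y \<in> level n B (t + k * int m)"
    using level_transl t by auto
  moreover have "fst (transl n k x) < fst (transl n k y)" using t by simp
  moreover have "\<not> (\<exists>z\<in>level n B (t + k * int m). fst (transl n k x) < fst z \<and> fst z < fst (transl n k y))"
  proof
    assume "\<exists>z\<in>level n B (t + k * int m). fst (transl n k x) < fst z \<and> fst z < fst (transl n k y)"
    then obtain z where z: "z \<in> level n B (t + k * int m)" "fst (transl n k x) < fst z" "fst z < fst (transl n k y)"
      by blast
    have "transl n (-k) z \<in> level n B (t + k * int m + (-k) * int m)" using level_transl z(1) by blast
    hence "transl n (-k) z \<in> level n B t" by simp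
    moreover have "fst x < fst (transl n (-k) z)" "fst (transl n (-k) z) < fst y" using z by simp_all
    ultimately show False using t by blast
  qed
  ultimately show ?thesis unfolding level_succ_def by blast
qed

lemma has_later_transl_imp: "x \<in> B \<Longrightarrow> has_later x \<Longrightarrow> has_later (transl n k x)"
  using level_succ_exists level_succ_transl level_succ_has_later by blast

lemma has_earlier_transl_imp: "y \<in> B \<Longrightarrow> has_earlier y \<Longrightarrow> has_earlier (transl n k y)"
  using level_succ_exists_pred level_succ_transl level_succ_has_earlier by blast

lemma has_later_transl: "x \<in> B \<Longrightarrow> has_later (transl n k x) \<longleftrightarrow> has_later x"
  using has_later_transl_imp[of x k] has_later_transl_imp[of "transl n k x" "-k"] transl_mem by auto

lemma has_earlier_transl: "y \<in> B \<Longrightarrow> has_earlier (transl n k y) \<longleftrightarrow> has_earlier y"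
  using has_earlier_transl_imp[of y k] has_earlier_transl_imp[of "transl n k y" "-k"] transl_mem by auto

lemma partial_perm_fw: "partial_perm n (fw n B)"
  unfolding partial_perm_def transl_invariant_def
proof (intro conjI ballI allI)
  fix b k assume "b \<in> fw n B"
  then obtain x y where xy: "b = (fst y, snd x)" "level_succ n B x y" unfolding fw_eq_level_succ by blast
  hence "level_succ n B (transl n k x) (transl n k y)" using level_succ_transl by blast
  moreover have "transl n k b = (fst (transl n k y), snd (transl n k x))" using xy by (simp add: transl_def)
  ultimately show "transl n k b \<in> fw n B" unfolding fw_eq_level_succ by blast
next
  show "inj_on fst (fw n B)"
  proof (rule inj_onI)
    fix a b assume "a \<in> fw n B" "b \<in> fw n B" "fst a = fst b"
    then obtain x y x' y' where h: "a = (fst y, snd x)" "level_succ n B x y" "b = (fst y', snd x')" "level_succ n B x' y'"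
      unfolding fw_eq_level_succ by blast
    have "fst y = fst y'" using h \<open>fst a = fst b\<close> by simp
    hence "y = y'" using fst_eq level_succD(2)[OF h(2)] level_succD(2)[OF h(4)] by blast
    hence "x = x'" using level_succ_unique_pred h by blast
    thus "a = b" using h \<open>y = y'\<close> by simp
  qed
next
  show "inj_on snd (fw n B)"
  proof (rule inj_onI)
    fix a b assume "a \<in> fw n B" "b \<in> fw n B" "snd a = snd b"
    then obtain x y x' y' where h: "a = (fst y, snd x)" "level_succ n B x y" "b = (fst y', snd x')" "level_succ n B x' y'"
      unfolding fw_eq_level_succ by blast
    have "snd x = snd x'" using h \<open>snd a = snd b\<close> by simp
    hence "x = x'" using snd_eq level_succD(1)[OF h(2)] level_succD(1)[OF h(4)] by blast
    hence "y = y'" using level_succ_unique h by blast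
    thus "a = b" using h \<open>x = x'\<close> by simp
  qed
qed

lemma back_corner_col_iff:
  "(\<exists>i. (i, j) \<in> back_corners n B) \<longleftrightarrow> (\<exists>x\<in>B. snd x = j \<and> \<not> has_later x)"
proof
  assume "\<exists>i. (i, j) \<in> back_corners n B"
  then obtain i t j0 i1 where h: "(i, j0) \<in> level n B t" "(i1, j) \<in> level n B t"
    "\<forall>b\<in>level n B t. i \<le> fst b \<and> fst b \<le> i1" unfolding back_corners_def by blast
  have xB: "(i1, j) \<in> B" "d (i1, j) = t" using h(2) level_iff by auto
  have "\<not> has_later (i1, j)" unfolding has_later_def xB(2) using h(3) by fastforce
  moreover have "snd (i1, j) = j" by simp
  ultimately show "\<exists>x\<in>B. snd x = j \<and> \<not> has_later x" using xB(1) by blast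
next
  assume "\<exists>x\<in>B. snd x = j \<and> \<not> has_later x"
  then obtain x where x: "x \<in> B" "snd x = j" "\<not> has_later x" by blast
  let ?L = "level n B (d x)"
  have xL: "x \<in> ?L" using x level_iff by simp
  have fin: "finite (fst ` ?L)" using finite_level by simp
  have ne: "fst ` ?L \<noteq> {}" using xL by blast
  obtain a where a: "a \<in> ?L" "fst a = Min (fst ` ?L)" using Min_in[OF fin ne] by auto
  have "\<forall>b\<in>?L. fst a \<le> fst b \<and> fst b \<le> fst x"
  proof
    fix b assume b: "b \<in> ?L"
    have "fst a \<le> fst b" using a fin b by simp
    moreover have "\<not> fst x < fst b" using x(3) b unfolding has_later_def by blast
    ultimately show "fst a \<le> fst b \<and> fst b \<le> fst x" by simp
  qed
  moreover have "(fst a, snd a) \<in> ?L" "(fst x, snd x) \<in> ?L" using a(1) xL by simp_all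
  ultimately have "(fst a, snd x) \<in> back_corners n B" unfolding back_corners_def by blast
  thus "\<exists>i. (i, j) \<in> back_corners n B" using x by blast
qed

lemma back_corner_row_iff:
  "(\<exists>j. (i, j) \<in> back_corners n B) \<longleftrightarrow> (\<exists>y\<in>B. fst y = i \<and> \<not> has_earlier y)"
proof
  assume "\<exists>j. (i, j) \<in> back_corners n B"
  then obtain j t j0 i1 where h: "(i, j0) \<in> level n B t" "(i1, j) \<in> level n B t"
    "\<forall>b\<in>level n B t. i \<le> fst b \<and> fst b \<le> i1" unfolding back_corners_def by blast
  have xB: "(i, j0) \<in> B" "d (i, j0) = t" using h(1) level_iff by auto
  have "\<not> has_earlier (i, j0)" unfolding has_earlier_def xB(2) using h(3) by fastforce
  moreover have "fst (i, j0) = i" by simp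
  ultimately show "\<exists>y\<in>B. fst y = i \<and> \<not> has_earlier y" using xB(1) by blast
next
  assume "\<exists>y\<in>B. fst y = i \<and> \<not> has_earlier y"
  then obtain x where x: "x \<in> B" "fst x = i" "\<not> has_earlier x" by blast
  let ?L = "level n B (d x)"
  have xL: "x \<in> ?L" using x level_iff by simp
  have fin: "finite (fst ` ?L)" using finite_level by simp
  have ne: "fst ` ?L \<noteq> {}" using xL by blast
  obtain a where a: "a \<in> ?L" "fst a = Max (fst ` ?L)" using Max_in[OF fin ne] by auto
  have "\<forall>b\<in>?L. fst x \<le> fst b \<and> fst b \<le> fst a"
  proof
    fix b assume b: "b \<in> ?L"
    have "fst b \<le> fst a" using a fin b by simp
    moreover have "\<not> fst b < fst x" using x(3) b unfolding has_earlier_def by blast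
    ultimately show "fst x \<le> fst b \<and> fst b \<le> fst a" by simp
  qed
  moreover have "(fst a, snd a) \<in> ?L" "(fst x, snd x) \<in> ?L" using a(1) xL by simp_all
  ultimately have "(fst x, snd a) \<in> back_corners n B" unfolding back_corners_def by blast
  thus "\<exists>j. (i, j) \<in> back_corners n B" using x by blast
qed

end

definition back_col_residues :: "int \<Rightarrow> (int \<times> int) set \<Rightarrow> int set" where
  "back_col_residues n X = {j mod n | i j. (i, j) \<in> back_corners n X}"

definition back_row_residues :: "int \<Rightarrow> (int \<times> int) set \<Rightarrow> int set" where
  "back_row_residues n X = {i mod n | i j. (i, j) \<in> back_corners n X}"

context nonempty_partial_perm
begin

lemma back_col_residues_eq: "back_col_residues n B = col_residues n B - col_residues n (fw n B)"
proof (intro set_eqI iffI)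
  fix r assume "r \<in> back_col_residues n B"
  then obtain i j where ij: "r = j mod n" "(i, j) \<in> back_corners n B" unfolding back_col_residues_def by blast
  then obtain x where x: "x \<in> B" "snd x = j" "\<not> has_later x" using back_corner_col_iff by blast
  have "r = snd x mod n" using x ij by simp
  hence "r \<in> col_residues n B" using x(1) unfolding col_residues_def by blast
  moreover have "r \<notin> col_residues n (fw n B)"
  proof
    assume "r \<in> col_residues n (fw n B)"
    then obtain z where z: "z \<in> fw n B" "snd z mod n = r" unfolding col_residues_def by blast
    then obtain x' y where xy: "z = (fst y, snd x')" "level_succ n B x' y" unfolding fw_eq_level_succ by blast
    have x'B: "x' \<in> B" using level_succD(1)[OF xy(2)] .
    have "snd x mod n = snd x' mod n" using z xy x ij by simp
    then obtain k where "x' = transl n k x" using partial_perm_same_col_residue[OF partial_perm x(1) x'B] by blast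
    hence "has_later x" using level_succ_has_later[OF xy(2)] has_later_transl[OF x(1)] by simp
    thus False using x by simp
  qed
  ultimately show "r \<in> col_residues n B - col_residues n (fw n B)" by simp
next
  fix r assume r: "r \<in> col_residues n B - col_residues n (fw n B)"
  then obtain x where x: "x \<in> B" "snd x mod n = r" unfolding col_residues_def by blast
  have "\<not> has_later x"
  proof
    assume "has_later x"
    then obtain y where "level_succ n B x y" using level_succ_exists x by blast
    hence "(fst y, snd x) \<in> fw n B" unfolding fw_eq_level_succ by blast
    moreover have "r = snd (fst y, snd x) mod n" using x by simp
    ultimately have "r \<in> col_residues n (fw n B)" unfolding col_residues_def by blast
    thus False using r by simp
  qed
  then obtain i where "(i, snd x) \<in> back_corners n B" using back_corner_col_iff x by blast
  thus "r \<in> back_col_residues n B" using x unfolding back_col_residues_def by blast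
qed

lemma back_row_residues_eq: "back_row_residues n B = row_residues n B - row_residues n (fw n B)"
proof (intro set_eqI iffI)
  fix r assume "r \<in> back_row_residues n B"
  then obtain i j where ij: "r = i mod n" "(i, j) \<in> back_corners n B" unfolding back_row_residues_def by blast
  then obtain x where x: "x \<in> B" "fst x = i" "\<not> has_earlier x" using back_corner_row_iff by blast
  have "r = fst x mod n" using x ij by simp
  hence "r \<in> row_residues n B" using x(1) unfolding row_residues_def by blast
  moreover have "r \<notin> row_residues n (fw n B)"
  proof
    assume "r \<in> row_residues n (fw n B)"
    then obtain z where z: "z \<in> fw n B" "fst z mod n = r" unfolding row_residues_def by blast
    then obtain x' y where xy: "z = (fst y, snd x')" "level_succ n B x' y" unfolding fw_eq_level_succ by blast
    have yB: "y \<in> B" using level_succD(2)[OF xy(2)] .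
    have "fst x mod n = fst y mod n" using z xy x ij by simp
    then obtain k where "y = transl n k x" using partial_perm_same_row_residue[OF partial_perm x(1) yB] by blast
    hence "has_earlier x" using level_succ_has_earlier[OF xy(2)] has_earlier_transl[OF x(1)] by simp
    thus False using x by simp
  qed
  ultimately show "r \<in> row_residues n B - row_residues n (fw n B)" by simp
next
  fix r assume r: "r \<in> row_residues n B - row_residues n (fw n B)"
  then obtain x where x: "x \<in> B" "fst x mod n = r" unfolding row_residues_def by blast
  have "\<not> has_earlier x"
  proof
    assume "has_earlier x"
    then obtain y where "level_succ n B y x" using level_succ_exists_pred x by blast
    hence "(fst x, snd y) \<in> fw n B" unfolding fw_eq_level_succ by blast
    moreover have "r = fst (fst x, snd y) mod n" using x by simp
    ultimately have "r \<in> row_residues n (fw n B)" unfolding row_residues_def by blast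
    thus False using r by simp
  qed
  then obtain j where "(fst x, j) \<in> back_corners n B" using back_corner_row_iff x by blast
  thus "r \<in> back_row_residues n B" using x unfolding back_row_residues_def by blast
qed

lemma col_residues_fw_subset: "col_residues n (fw n B) \<subseteq> col_residues n B"
proof
  fix r assume "r \<in> col_residues n (fw n B)"
  then obtain z where z: "z \<in> fw n B" "r = snd z mod n" unfolding col_residues_def by blast
  then obtain x y where xy: "z = (fst y, snd x)" "level_succ n B x y" unfolding fw_eq_level_succ by blast
  have "x \<in> B" using level_succD(1)[OF xy(2)] .
  moreover have "r = snd x mod n" using z xy by simp
  ultimately show "r \<in> col_residues n B" unfolding col_residues_def by blast
qed

lemma row_residues_fw_subset: "row_residues n (fw n B) \<subseteq> row_residues n B"
proof
  fix r assume "r \<in> row_residues n (fw n B)"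
  then obtain z where z: "z \<in> fw n B" "r = fst z mod n" unfolding row_residues_def by blast
  then obtain x y where xy: "z = (fst y, snd x)" "level_succ n B x y" unfolding fw_eq_level_succ by blast
  have "y \<in> B" using level_succD(2)[OF xy(2)] .
  moreover have "r = fst y mod n" using z xy by simp
  ultimately show "r \<in> row_residues n B" unfolding row_residues_def by blast
qed

lemma back_col_residues_nonempty: "back_col_residues n B \<noteq> {}"
proof -
  obtain x where x: "x \<in> B" using nonempty by blast
  let ?L = "level n B (d x)"
  have xL: "x \<in> ?L" using x level_iff by simp
  have fin: "finite (fst ` ?L)" using finite_level by simp
  have ne: "fst ` ?L \<noteq> {}" using xL by blast
  obtain a where a: "a \<in> ?L" "fst a = Max (fst ` ?L)" using Max_in[OF fin ne] by auto
  have aB: "a \<in> B" and da: "d a = d x" using a level_iff by auto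
  have "\<not> has_later a"
  proof
    assume "has_later a"
    then obtain z where z: "z \<in> level n B (d a)" "fst a < fst z" unfolding has_later_def by blast
    have "fst z \<in> fst ` ?L" using z(1) da by simp
    hence "fst z \<le> Max (fst ` ?L)" using Max_ge[OF fin] by blast
    thus False using a z by simp
  qed
  then obtain i where "(i, snd a) \<in> back_corners n B" using back_corner_col_iff aB by blast
  thus ?thesis unfolding back_col_residues_def by blast
qed

lemma dval_le_if_snw_below:
  assumes a: "a \<in> B" and b: "b \<in> B" and below: "\<forall>z\<in>B. snw z b \<longrightarrow> snw z a"
  shows "d b \<le> d a"
proof (rule ccontr)
  assume "\<not> d b \<le> d a"
  then obtain z where "z \<in> B" "snw z b" "d z = d a" using dval_below[OF b, of "d a"] by auto
  thus False using dval_less[OF _ a] below by fastforce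
qed

lemma col_descent_step:
  assumes a: "a \<in> B" and b: "b \<in> B" and sb: "snd b = snd a + 1" and r: "fst b < fst a"
  shows "\<exists>y. level_succ n B b y \<and> fst y \<le> fst a"
proof -
  have "\<forall>z\<in>B. snw z b \<longrightarrow> snw z a"
    using snd_eq[OF _ a] sb r by (fastforce simp: snw_def)
  hence "d b \<le> d a" using dval_le_if_snw_below[OF a b] by blast
  have "\<exists>z\<in>level n B (d b). fst b < fst z \<and> fst z \<le> fst a"
  proof (cases "d b = d a")
    case True thus ?thesis using a r by (auto simp: level_iff)
  next
    case False
    with \<open>d b \<le> d a\<close> obtain z where z: "z \<in> B" "snw z a" "d z = d b"
      using dval_below[OF a, of "d b"] by auto
    have "\<not> snw z b" using dval_less[OF z(1) b] z(3) by auto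
    moreover have "z \<noteq> b" using z(2) sb by (auto simp: snw_def)
    hence "fst z \<noteq> fst b" using fst_eq[OF z(1) b] by blast
    ultimately have "fst b < fst z" using z(2) sb by (auto simp: snw_def)
    thus ?thesis using z by (auto simp: snw_def level_iff)
  qed
  then obtain z where z: "z \<in> level n B (d b)" "fst b < fst z" "fst z \<le> fst a" by blast
  hence "has_later b" unfolding has_later_def by blast
  then obtain y where y: "level_succ n B b y" using level_succ_exists b by blast
  moreover have "fst y \<le> fst a" using level_succD(6)[OF y z(1,2)] z(3) by simp
  ultimately show ?thesis by blast
qed

lemma col_ascent_step:
  assumes a: "a \<in> B" and b: "b \<in> B" and sb: "snd b = snd a + 1" and r: "fst a < fst b"
    and yb: "level_succ n B b yb"
  shows "\<exists>ya. level_succ n B a ya \<and> fst ya < fst yb"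
proof -
  have dab: "d a < d b" using dval_less[OF a b] sb r by (simp add: snw_def)
  have ybB: "yb \<in> B" and "d yb = d b" "snd yb < snd b" using level_succD[OF yb] by auto
  moreover have "yb \<noteq> a" using dab \<open>d yb = d b\<close> by auto
  ultimately have ybj: "snd yb < snd a" using snd_eq[OF ybB a] sb by fastforce
  obtain x where x: "x \<in> B" "snw x yb" "d x = d a"
    using dval_below[OF ybB, of "d a"] dab \<open>d yb = d b\<close> by auto
  have xL: "x \<in> level n B (d a)" and aL: "a \<in> level n B (d a)" using x a by (auto simp: level_iff)
  have xa: "fst a < fst x" using level_fst_less[OF aL xL] x(2) ybj by (simp add: snw_def)
  hence "has_later a" unfolding has_later_def using xL by blast
  then obtain ya where ya: "level_succ n B a ya" using level_succ_exists a by blast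
  moreover have "fst ya < fst yb" using level_succD(6)[OF ya xL xa] x(2) by (simp add: snw_def)
  ultimately show ?thesis by blast
qed

lemma row_descent_step:
  assumes a: "a \<in> B" and b: "b \<in> B" and fb: "fst b = fst a + 1" and c: "snd b < snd a"
  shows "\<exists>x. level_succ n B x b \<and> snd x \<le> snd a"
proof -
  have "\<forall>z\<in>B. snw z b \<longrightarrow> snw z a"
    using fst_eq[OF _ a] fb c by (fastforce simp: snw_def)
  hence "d b \<le> d a" using dval_le_if_snw_below[OF a b] by blast
  have "\<exists>z\<in>level n B (d b). snd b < snd z \<and> snd z \<le> snd a"
  proof (cases "d b = d a")
    case True thus ?thesis using a c by (auto simp: level_iff)
  next
    case False
    with \<open>d b \<le> d a\<close> obtain z where z: "z \<in> B" "snw z a" "d z = d b"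
      using dval_below[OF a, of "d b"] by auto
    have "\<not> snw z b" using dval_less[OF z(1) b] z(3) by auto
    moreover have "z \<noteq> b" using z(2) fb by (auto simp: snw_def)
    hence "snd z \<noteq> snd b" using snd_eq[OF z(1) b] by blast
    ultimately have "snd b < snd z" using z(2) fb by (auto simp: snw_def)
    thus ?thesis using z by (auto simp: snw_def level_iff)
  qed
  then obtain z where z: "z \<in> level n B (d b)" "snd b < snd z" "snd z \<le> snd a" by blast
  have bL: "b \<in> level n B (d b)" using b by (simp add: level_iff)
  have zf: "fst z < fst b" using level_fst_less[OF z(1) bL z(2)] .
  hence "has_earlier b" unfolding has_earlier_def using z(1) by blast
  then obtain x where x: "level_succ n B x b" using level_succ_exists_pred b by blast
  have "fst z \<le> fst x" using level_succD(7)[OF x _ zf] z(1) level_succD(3)[OF x] by simp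
  moreover have "x \<in> level n B (d b)" using level_succD(1,3)[OF x] by (simp add: level_iff)
  ultimately have "snd x \<le> snd a" using level_snd_le[OF z(1)] z(3) by fastforce
  thus ?thesis using x by blast
qed

lemma row_ascent_step:
  assumes a: "a \<in> B" and b: "b \<in> B" and fb: "fst b = fst a + 1" and c: "snd a < snd b"
    and xb: "level_succ n B xb b"
  shows "\<exists>xa. level_succ n B xa a \<and> snd xa < snd xb"
proof -
  have dab: "d a < d b" using dval_less[OF a b] fb c by (simp add: snw_def)
  have xbB: "xb \<in> B" and "d xb = d b" "fst xb < fst b" using level_succD[OF xb] by auto
  moreover have "xb \<noteq> a" using dab \<open>d xb = d b\<close> by auto
  ultimately have xbi: "fst xb < fst a" using fst_eq[OF xbB a] fb by fastforce
  obtain x where x: "x \<in> B" "snw x xb" "d x = d a"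
    using dval_below[OF xbB, of "d a"] dab \<open>d xb = d b\<close> by auto
  have xL: "x \<in> level n B (d a)" using x by (simp add: level_iff)
  have xa: "fst x < fst a" using x(2) xbi by (simp add: snw_def)
  hence "has_earlier a" unfolding has_earlier_def using xL by blast
  then obtain xa where xa': "level_succ n B xa a" using level_succ_exists_pred a by blast
  have "fst x \<le> fst xa" using level_succD(7)[OF xa' _ xa] xL level_succD(3)[OF xa'] by simp
  moreover have "xa \<in> level n B (d a)" using level_succD(1,3)[OF xa'] by (simp add: level_iff)
  ultimately have "snd xa < snd xb" using level_snd_le[OF xL] x(2) by (fastforce simp: snw_def)
  thus ?thesis using xa' by blast
qed

end

section \<open>Iterating the forward step\<close>

lemma fw_empty [simp]: "fw n {} = {}"
  by (simp add: fw_def level_def)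

lemma back_corners_empty [simp]: "back_corners n {} = {}"
  by (simp add: back_corners_def level_def)

definition ambc_iter :: "int \<Rightarrow> (int \<Rightarrow> int) \<Rightarrow> nat \<Rightarrow> (int \<times> int) set" where
  "ambc_iter n w k = (fw n ^^ k) (balls w)"

lemma ambc_iter_0: "ambc_iter n w 0 = balls w"
  by (simp add: ambc_iter_def)

lemma ambc_iter_Suc: "ambc_iter n w (Suc k) = fw n (ambc_iter n w k)"
  by (simp add: ambc_iter_def)

lemma periodic_shift:
  fixes w :: "int \<Rightarrow> int"
  assumes "\<forall>i. w (i + n) = w i + n"
  shows "w (i + k * n) = w i + k * n"
proof (induction k rule: int_induct[where k = 0])
  case (step1 k)
  thus ?case using assms[rule_format, of "i + k * n"] by (simp add: algebra_simps)
next
  case (step2 k)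
  thus ?case using assms[rule_format, of "i + (k - 1) * n"] by (simp add: algebra_simps)
qed simp

lemma partial_perm_balls:
  assumes "inj w" "\<forall>i. w (i + n) = w i + n"
  shows "partial_perm n (balls w)"
  unfolding partial_perm_def transl_invariant_def
proof (intro conjI ballI allI)
  fix b k assume "b \<in> balls w"
  then obtain i where "b = (i, w i)" unfolding balls_def by blast
  hence "transl n k b = (i + k * n, w (i + k * n))" using periodic_shift[OF assms(2)] by (simp add: transl_def)
  thus "transl n k b \<in> balls w" unfolding balls_def by blast
next
  show "inj_on fst (balls w)" unfolding balls_def by (auto simp: inj_on_def)
  show "inj_on snd (balls w)" using assms(1) unfolding balls_def by (auto simp: inj_on_def inj_def)
qed

context
  fixes n :: int and w :: "int \<Rightarrow> int"
  assumes n: "n > 0" and balls: "partial_perm n (balls w)"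
begin

lemma partial_perm_ambc_iter: "partial_perm n (ambc_iter n w k)"
proof (induction k)
  case (Suc k)
  show ?case
  proof (cases "ambc_iter n w k = {}")
    case False
    interpret nonempty_partial_perm n "ambc_iter n w k"
      using n Suc False by unfold_locales
    show ?thesis using partial_perm_fw by (simp add: ambc_iter_Suc)
  qed (simp add: ambc_iter_Suc partial_perm_def transl_invariant_def)
qed (simp add: ambc_iter_0 balls)

lemma nonempty_partial_perm_ambc_iter:
  "ambc_iter n w k \<noteq> {} \<Longrightarrow> nonempty_partial_perm n (ambc_iter n w k)"
  using n partial_perm_ambc_iter by unfold_locales

lemma col_residues_ambc_iter_Suc: "col_residues n (ambc_iter n w (Suc k)) \<subseteq> col_residues n (ambc_iter n w k)"
  using nonempty_partial_perm.col_residues_fw_subset[OF nonempty_partial_perm_ambc_iter, of k]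
  by (cases "ambc_iter n w k = {}") (simp_all add: ambc_iter_Suc col_residues_def)

lemma row_residues_ambc_iter_Suc: "row_residues n (ambc_iter n w (Suc k)) \<subseteq> row_residues n (ambc_iter n w k)"
  using nonempty_partial_perm.row_residues_fw_subset[OF nonempty_partial_perm_ambc_iter, of k]
  by (cases "ambc_iter n w k = {}") (simp_all add: ambc_iter_Suc row_residues_def)

lemma ambc_P_eq: "ambc_P n w k = col_residues n (ambc_iter n w k) - col_residues n (ambc_iter n w (Suc k))"
proof (cases "ambc_iter n w k = {}")
  case False
  interpret nonempty_partial_perm n "ambc_iter n w k" using nonempty_partial_perm_ambc_iter[OF False] .
  have "ambc_P n w k = back_col_residues n (ambc_iter n w k)"
    unfolding ambc_P_def back_col_residues_def ambc_iter_def by simp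
  thus ?thesis using back_col_residues_eq by (simp add: ambc_iter_Suc)
qed (simp add: ambc_P_def ambc_iter_Suc col_residues_def flip: ambc_iter_def)

lemma ambc_Q_eq: "ambc_Q n w k = row_residues n (ambc_iter n w k) - row_residues n (ambc_iter n w (Suc k))"
proof (cases "ambc_iter n w k = {}")
  case False
  interpret nonempty_partial_perm n "ambc_iter n w k" using nonempty_partial_perm_ambc_iter[OF False] .
  have "ambc_Q n w k = back_row_residues n (ambc_iter n w k)"
    unfolding ambc_Q_def back_row_residues_def ambc_iter_def by simp
  thus ?thesis using back_row_residues_eq by (simp add: ambc_iter_Suc)
qed (simp add: ambc_Q_def ambc_iter_Suc row_residues_def flip: ambc_iter_def)

text \<open>Each step removes at least one column residue, so after \<open>n\<close> steps nothing is left.\<close>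

lemma card_col_residues_ambc_iter:
  "ambc_iter n w k \<noteq> {} \<Longrightarrow> card (col_residues n (ambc_iter n w k)) + k \<le> nat n"
proof (induction k)
  case 0
  show ?case using card_mono[OF _ col_residues_subset[OF n]] by fastforce
next
  case (Suc k)
  have ne: "ambc_iter n w k \<noteq> {}" using Suc.prems by (auto simp: ambc_iter_Suc)
  interpret nonempty_partial_perm n "ambc_iter n w k" using nonempty_partial_perm_ambc_iter[OF ne] .
  have "col_residues n (ambc_iter n w (Suc k)) \<subset> col_residues n (ambc_iter n w k)"
    using back_col_residues_nonempty back_col_residues_eq col_residues_fw_subset
    by (auto simp: ambc_iter_Suc)
  hence "card (col_residues n (ambc_iter n w (Suc k))) < card (col_residues n (ambc_iter n w k))"
    using psubset_card_mono finite_col_residues[OF n] by blast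
  thus ?case using Suc.IH[OF ne] by simp
qed

lemma ambc_iter_nat_empty: "ambc_iter n w (nat n) = {}"
proof (rule ccontr)
  assume ne: "ambc_iter n w (nat n) \<noteq> {}"
  hence "col_residues n (ambc_iter n w (nat n)) \<noteq> {}" by (simp add: col_residues_def)
  hence "card (col_residues n (ambc_iter n w (nat n))) > 0"
    using finite_col_residues[OF n] by (simp add: card_gt_0_iff)
  thus False using card_col_residues_ambc_iter[OF ne] by simp
qed

lemma fw_ambc_iterE:
  assumes "a \<in> ambc_iter n w (Suc k)"
  obtains x y where "nonempty_partial_perm n (ambc_iter n w k)"
    "level_succ n (ambc_iter n w k) x y" "a = (fst y, snd x)"
proof -
  have "ambc_iter n w k \<noteq> {}" using assms by (auto simp: ambc_iter_Suc)
  moreover obtain x y where "level_succ n (ambc_iter n w k) x y" "a = (fst y, snd x)"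
    using assms unfolding ambc_iter_Suc fw_eq_level_succ by blast
  ultimately show ?thesis using that nonempty_partial_perm_ambc_iter by blast
qed

lemma fw_ambc_iterI:
  "level_succ n (ambc_iter n w k) x y \<Longrightarrow> (fst y, snd x) \<in> ambc_iter n w (Suc k)"
  unfolding ambc_iter_Suc fw_eq_level_succ by blast

lemma left_descent_persists:
  assumes "(ra, j) \<in> balls w" "(rb, j + 1) \<in> balls w" "rb < ra"
  shows "(\<exists>a\<in>ambc_iter n w k. snd a = j) \<longrightarrow>
    (\<exists>a\<in>ambc_iter n w k. \<exists>b\<in>ambc_iter n w k. snd a = j \<and> snd b = j + 1 \<and> fst b < fst a)"
proof (induction k)
  case 0 show ?case using assms by (force simp: ambc_iter_0)
next
  case (Suc k)
  show ?case
  proof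
    assume "\<exists>a\<in>ambc_iter n w (Suc k). snd a = j"
    then obtain x' y' where xy: "nonempty_partial_perm n (ambc_iter n w k)"
      "level_succ n (ambc_iter n w k) x' y'" "snd x' = j"
      by (metis fw_ambc_iterE snd_conv)
    interpret nonempty_partial_perm n "ambc_iter n w k" using xy(1) .
    obtain a b where ab: "a \<in> ambc_iter n w k" "b \<in> ambc_iter n w k" "snd a = j" "snd b = j + 1"
      "fst b < fst a" using Suc level_succD(1)[OF xy(2)] xy(3) by blast
    have "a = x'" using snd_eq[OF ab(1) level_succD(1)[OF xy(2)]] ab(3) xy(3) by simp
    obtain y where y: "level_succ n (ambc_iter n w k) b y" "fst y \<le> fst a"
      using col_descent_step[OF ab(1,2) _ ab(5)] ab(3,4) by auto
    have "fst y < fst y'" using level_succD(4)[OF xy(2)] \<open>a = x'\<close> y(2) by simp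
    thus "\<exists>a\<in>ambc_iter n w (Suc k). \<exists>b\<in>ambc_iter n w (Suc k). snd a = j \<and> snd b = j + 1 \<and> fst b < fst a"
      using fw_ambc_iterI[OF xy(2)] fw_ambc_iterI[OF y(1)] xy(3) ab(4)
      by (intro bexI[of _ "(fst y', snd x')"] bexI[of _ "(fst y, snd b)"]) simp_all
  qed
qed

lemma left_ascent_persists:
  assumes "(ra, j) \<in> balls w" "(rb, j + 1) \<in> balls w" "ra < rb"
  shows "(\<exists>b\<in>ambc_iter n w k. snd b = j + 1) \<longrightarrow>
    (\<exists>a\<in>ambc_iter n w k. \<exists>b\<in>ambc_iter n w k. snd a = j \<and> snd b = j + 1 \<and> fst a < fst b)"
proof (induction k)
  case 0 show ?case using assms by (force simp: ambc_iter_0)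
next
  case (Suc k)
  show ?case
  proof
    assume "\<exists>b\<in>ambc_iter n w (Suc k). snd b = j + 1"
    then obtain x' y' where xy: "nonempty_partial_perm n (ambc_iter n w k)"
      "level_succ n (ambc_iter n w k) x' y'" "snd x' = j + 1"
      by (metis fw_ambc_iterE snd_conv)
    interpret nonempty_partial_perm n "ambc_iter n w k" using xy(1) .
    obtain a b where ab: "a \<in> ambc_iter n w k" "b \<in> ambc_iter n w k" "snd a = j" "snd b = j + 1"
      "fst a < fst b" using Suc level_succD(1)[OF xy(2)] xy(3) by blast
    have "b = x'" using snd_eq[OF ab(2) level_succD(1)[OF xy(2)]] ab(4) xy(3) by simp
    have "snd b = snd a + 1" using ab(3,4) by simp
    then obtain ya where ya: "level_succ n (ambc_iter n w k) a ya" "fst ya < fst y'"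
      using col_ascent_step[OF ab(1,2) _ ab(5)] xy(2) \<open>b = x'\<close> by blast
    thus "\<exists>a\<in>ambc_iter n w (Suc k). \<exists>b\<in>ambc_iter n w (Suc k). snd a = j \<and> snd b = j + 1 \<and> fst a < fst b"
      using fw_ambc_iterI[OF xy(2)] fw_ambc_iterI[OF ya(1)] xy(3) ab(3)
      by (intro bexI[of _ "(fst ya, snd a)"] bexI[of _ "(fst y', snd x')"]) simp_all
  qed
qed

lemma right_descent_persists:
  assumes "(j, ca) \<in> balls w" "(j + 1, cb) \<in> balls w" "cb < ca"
  shows "(\<exists>a\<in>ambc_iter n w k. fst a = j) \<longrightarrow>
    (\<exists>a\<in>ambc_iter n w k. \<exists>b\<in>ambc_iter n w k. fst a = j \<and> fst b = j + 1 \<and> snd b < snd a)"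
proof (induction k)
  case 0 show ?case using assms by (force simp: ambc_iter_0)
next
  case (Suc k)
  show ?case
  proof
    assume "\<exists>a\<in>ambc_iter n w (Suc k). fst a = j"
    then obtain x' y' where xy: "nonempty_partial_perm n (ambc_iter n w k)"
      "level_succ n (ambc_iter n w k) x' y'" "fst y' = j"
      by (metis fw_ambc_iterE fst_conv)
    interpret nonempty_partial_perm n "ambc_iter n w k" using xy(1) .
    obtain a b where ab: "a \<in> ambc_iter n w k" "b \<in> ambc_iter n w k" "fst a = j" "fst b = j + 1"
      "snd b < snd a" using Suc level_succD(2)[OF xy(2)] xy(3) by blast
    have "a = y'" using fst_eq[OF ab(1) level_succD(2)[OF xy(2)]] ab(3) xy(3) by simp
    obtain x where x: "level_succ n (ambc_iter n w k) x b" "snd x \<le> snd a"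
      using row_descent_step[OF ab(1,2) _ ab(5)] ab(3,4) by auto
    have "snd x < snd x'" using level_succD(5)[OF xy(2)] \<open>a = y'\<close> x(2) by simp
    thus "\<exists>a\<in>ambc_iter n w (Suc k). \<exists>b\<in>ambc_iter n w (Suc k). fst a = j \<and> fst b = j + 1 \<and> snd b < snd a"
      using fw_ambc_iterI[OF xy(2)] fw_ambc_iterI[OF x(1)] xy(3) ab(4)
      by (intro bexI[of _ "(fst y', snd x')"] bexI[of _ "(fst b, snd x)"]) simp_all
  qed
qed

lemma right_ascent_persists:
  assumes "(j, ca) \<in> balls w" "(j + 1, cb) \<in> balls w" "ca < cb"
  shows "(\<exists>b\<in>ambc_iter n w k. fst b = j + 1) \<longrightarrow>
    (\<exists>a\<in>ambc_iter n w k. \<exists>b\<in>ambc_iter n w k. fst a = j \<and> fst b = j + 1 \<and> snd a < snd b)"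
proof (induction k)
  case 0 show ?case using assms by (force simp: ambc_iter_0)
next
  case (Suc k)
  show ?case
  proof
    assume "\<exists>b\<in>ambc_iter n w (Suc k). fst b = j + 1"
    then obtain x' y' where xy: "nonempty_partial_perm n (ambc_iter n w k)"
      "level_succ n (ambc_iter n w k) x' y'" "fst y' = j + 1"
      by (metis fw_ambc_iterE fst_conv)
    interpret nonempty_partial_perm n "ambc_iter n w k" using xy(1) .
    obtain a b where ab: "a \<in> ambc_iter n w k" "b \<in> ambc_iter n w k" "fst a = j" "fst b = j + 1"
      "snd a < snd b" using Suc level_succD(2)[OF xy(2)] xy(3) by blast
    have "b = y'" using fst_eq[OF ab(2) level_succD(2)[OF xy(2)]] ab(4) xy(3) by simp
    have "fst b = fst a + 1" using ab(3,4) by simp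
    then obtain xa where xa: "level_succ n (ambc_iter n w k) xa a" "snd xa < snd x'"
      using row_ascent_step[OF ab(1,2) _ ab(5)] xy(2) \<open>b = y'\<close> by blast
    thus "\<exists>a\<in>ambc_iter n w (Suc k). \<exists>b\<in>ambc_iter n w (Suc k). fst a = j \<and> fst b = j + 1 \<and> snd a < snd b"
      using fw_ambc_iterI[OF xy(2)] fw_ambc_iterI[OF xa(1)] xy(3) ab(3)
      by (intro bexI[of _ "(fst a, snd xa)"] bexI[of _ "(fst y', snd x')"]) simp_all
  qed
qed

lemma left_descent_col_residues:
  assumes "(ra, j) \<in> balls w" "(rb, j + 1) \<in> balls w" "rb < ra"
    and "j mod n \<in> col_residues n (ambc_iter n w k)"
  shows "(j + 1) mod n \<in> col_residues n (ambc_iter n w (Suc k))"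
proof -
  obtain a b where ab: "a \<in> ambc_iter n w k" "b \<in> ambc_iter n w k" "snd a = j" "snd b = j + 1"
    "fst b < fst a"
    using left_descent_persists[OF assms(1-3), of k]
      partial_perm_col_in_residues[OF partial_perm_ambc_iter assms(4)] by blast
  interpret nonempty_partial_perm n "ambc_iter n w k"
    using nonempty_partial_perm_ambc_iter ab(1) by blast
  obtain y where "level_succ n (ambc_iter n w k) b y"
    using col_descent_step[OF ab(1,2) _ ab(5)] ab(3,4) by auto
  hence "(fst y, snd b) \<in> ambc_iter n w (Suc k)" by (rule fw_ambc_iterI)
  thus ?thesis using ab(4) unfolding col_residues_def by force
qed

lemma left_ascent_col_residues:
  assumes "(ra, j) \<in> balls w" "(rb, j + 1) \<in> balls w" "ra < rb"
    and "(j + 1) mod n \<in> col_residues n (ambc_iter n w k)"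
  shows "j mod n \<in> col_residues n (ambc_iter n w k)"
proof -
  obtain a where "a \<in> ambc_iter n w k" "snd a = j"
    using left_ascent_persists[OF assms(1-3), of k]
      partial_perm_col_in_residues[OF partial_perm_ambc_iter assms(4)] by blast
  thus ?thesis unfolding col_residues_def by force
qed

lemma right_descent_row_residues:
  assumes "(j, ca) \<in> balls w" "(j + 1, cb) \<in> balls w" "cb < ca"
    and "j mod n \<in> row_residues n (ambc_iter n w k)"
  shows "(j + 1) mod n \<in> row_residues n (ambc_iter n w (Suc k))"
proof -
  obtain a b where ab: "a \<in> ambc_iter n w k" "b \<in> ambc_iter n w k" "fst a = j" "fst b = j + 1"
    "snd b < snd a"
    using right_descent_persists[OF assms(1-3), of k]
      partial_perm_row_in_residues[OF partial_perm_ambc_iter assms(4)] by blast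
  interpret nonempty_partial_perm n "ambc_iter n w k"
    using nonempty_partial_perm_ambc_iter ab(1) by blast
  obtain x where "level_succ n (ambc_iter n w k) x b"
    using row_descent_step[OF ab(1,2) _ ab(5)] ab(3,4) by auto
  hence "(fst b, snd x) \<in> ambc_iter n w (Suc k)" by (rule fw_ambc_iterI)
  thus ?thesis using ab(4) unfolding row_residues_def by force
qed

lemma right_ascent_row_residues:
  assumes "(j, ca) \<in> balls w" "(j + 1, cb) \<in> balls w" "ca < cb"
    and "(j + 1) mod n \<in> row_residues n (ambc_iter n w k)"
  shows "j mod n \<in> row_residues n (ambc_iter n w k)"
proof -
  obtain a where "a \<in> ambc_iter n w k" "fst a = j"
    using right_ascent_persists[OF assms(1-3), of k]
      partial_perm_row_in_residues[OF partial_perm_ambc_iter assms(4)] by blast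
  thus ?thesis unfolding row_residues_def by force
qed

lemma Ldes_eq_tau:
  assumes "surj w"
  shows "Ldes n w = tau n (ambc_P n w)"
proof (intro set_eqI)
  fix i
  let ?S = "\<lambda>k. col_residues n (ambc_iter n w k)"
  have dec: "?S (Suc k) \<subseteq> ?S k" for k by (rule col_residues_ambc_iter_Suc)
  have ball: "(inv w j, j) \<in> balls w" for j
    unfolding balls_def using surj_f_inv_f[OF assms] by (metis (mono_tags, lifting) mem_Collect_eq)
  have "i \<in> Ldes n w \<longleftrightarrow> i \<in> tau n (ambc_P n w)" if i: "0 \<le> i" "i < n"
  proof (cases "inv w (i + 1) < inv w i")
    case True
    have i0: "i \<in> ?S 0" using ball[of i] i unfolding ambc_iter_0 col_residues_def by force
    have step: "(i + 1) mod n \<in> ?S (Suc k)" if "i \<in> ?S k" for k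
      using left_descent_col_residues[OF ball ball True] that i by simp
    have "?S (nat n) = {}" using ambc_iter_nat_empty by (simp add: col_residues_def)
    then obtain r r' where "r < r'" "i \<in> ?S r - ?S (Suc r)" "(i + 1) mod n \<in> ?S r' - ?S (Suc r')"
      using exit_before_exit[of ?S, OF dec _ i0 step] by blast
    thus ?thesis using True i by (auto simp: Ldes_def tau_def ambc_P_eq)
  next
    case False
    have "inv w i \<noteq> inv w (i + 1)" using surj_f_inv_f[OF assms] by (metis add_cancel_left_right one_neq_zero)
    hence "inv w i < inv w (i + 1)" using False by simp
    hence "i \<in> ?S k" if "(i + 1) mod n \<in> ?S k" for k
      using left_ascent_col_residues[OF ball ball _ that] i by simp
    thus ?thesis using not_exit_before_exit[of ?S, OF dec] False i
      by (simp add: Ldes_def tau_def ambc_P_eq)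
  qed
  thus "i \<in> Ldes n w \<longleftrightarrow> i \<in> tau n (ambc_P n w)" by (auto simp: Ldes_def tau_def)
qed

lemma Rdes_eq_tau: "Rdes n w = tau n (ambc_Q n w)"
proof (intro set_eqI)
  fix i
  let ?S = "\<lambda>k. row_residues n (ambc_iter n w k)"
  have dec: "?S (Suc k) \<subseteq> ?S k" for k by (rule row_residues_ambc_iter_Suc)
  have ball: "(j, w j) \<in> balls w" for j unfolding balls_def by blast
  have "i \<in> Rdes n w \<longleftrightarrow> i \<in> tau n (ambc_Q n w)" if i: "0 \<le> i" "i < n"
  proof (cases "w (i + 1) < w i")
    case True
    have i0: "i \<in> ?S 0" using ball[of i] i unfolding ambc_iter_0 row_residues_def by force
    have step: "(i + 1) mod n \<in> ?S (Suc k)" if "i \<in> ?S k" for k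
      using right_descent_row_residues[OF ball ball True] that i by simp
    have "?S (nat n) = {}" using ambc_iter_nat_empty by (simp add: row_residues_def)
    then obtain r r' where "r < r'" "i \<in> ?S r - ?S (Suc r)" "(i + 1) mod n \<in> ?S r' - ?S (Suc r')"
      using exit_before_exit[of ?S, OF dec _ i0 step] by blast
    thus ?thesis using True i by (auto simp: Rdes_def tau_def ambc_Q_eq)
  next
    case False
    have "w i \<noteq> w (i + 1)"
      using balls partial_perm_snd_eq[OF balls ball ball] by fastforce
    hence "w i < w (i + 1)" using False by simp
    hence "i \<in> ?S k" if "(i + 1) mod n \<in> ?S k" for k
      using right_ascent_row_residues[OF ball ball _ that] i by simp
    thus ?thesis using not_exit_before_exit[of ?S, OF dec] False i
      by (simp add: Rdes_def tau_def ambc_Q_eq)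
  qed
  thus "i \<in> Rdes n w \<longleftrightarrow> i \<in> tau n (ambc_Q n w)" by (auto simp: Rdes_def tau_def)
qed

end

theorem proposition3p6:
  fixes n :: int and w :: "int \<Rightarrow> int"
  assumes "1 \<le> n" and "bij w" and "\<forall>i. w (i + n) = w i + n"
  shows "Ldes n w = tau n (ambc_P n w) \<and> Rdes n w = tau n (ambc_Q n w)"
proof -
  have n: "n > 0" using assms(1) by simp
  have "partial_perm n (balls w)" using partial_perm_balls[OF bij_is_inj[OF assms(2)] assms(3)] .
  thus ?thesis using Ldes_eq_tau[OF n _ bij_is_surj[OF assms(2)]] Rdes_eq_tau[OF n] by blast
qed

end
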